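(* Let $n\ge 1$. Every equivalence class $\mathcal{E}\subseteq NS(n)$ (with respect to the equivalence relation generated by the elementary transformations (E1)–(E5) defined in the context) contains at least one member $(A;A;C;D)$ which is in canonical form.
   Context: A binary sequence is a finite sequence $A=a_1,\dots,a_n$ with $a_i\in\{\pm1\}$. Its nonperiodic autocorrelation function is $N_A(i)=\sum_{j\in\mathbb Z}a_ja_{i+j}$ ($i\in\mathbb Z$), where $a_k=0$ for $k<1$ or $k>n$. For binary sequences: $-A=-a_1,\dots,-a_n$ (negation), $A'=a_n,a_{n-1},\dots,a_1$ (reversal), $A^*=a_1,-a_2,a_3,\dots,(-1)^{n-1}a_n$ (alternation). Normal sequences: $NS(n)$ is the set of quadruples $(A;A;C;D)$ of binary sequences, all of length $n$, with the first two equal, such that $2N_A(i)+N_C(i)+N_D(i)=0$ for all $i\neq 0$. Encoding. Write $n=2m$ if $n$ is even and $n=2m+1$ if $n$ is odd. For $i=1,\dots,m$ the $i$-th quad of a pair $(X;Y)$ of sequences of length $n$ is the $2\times2$ matrix $\begin{bmatrix} x_i & x_{n+1-i}\\ y_i & y_{n+1-i}\end{bmatrix}$, and if $n$ is odd the central column is $\begin{bmatrix} x_{m+1}\\ y_{m+1}\end{bmatrix}$. Quads are labelled (rows written as pairs, first row then second row): $1=[(+,+),(+,+)]$, $2=[(+,+),(-,-)]$, $3=[(-,+),(-,+)]$, $4=[(+,-),(-,+)]$, $5=[(-,+),(+,-)]$, $6=[(+,-),(+,-)]$, $7=[(-,-),(+,+)]$, $8=[(-,-),(-,-)]$. Central columns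 are labelled $0=(+,+)^T$, $1=(+,-)^T$, $2=(-,+)^T$, $3=(-,-)^T$. A quad is symmetric if its two columns are equal (labels $1,2,7,8$) and skew otherwise (labels $3,4,5,6$); two quads have the same symmetry type if both are symmetric or both are skew. For $S=(A;A;C;D)\in NS(n)$, the pair $(A;A)$ is encoded by $p_1p_2\cdots p_m$ ($n$ even) or $p_1\cdots p_mp_{m+1}$ ($n$ odd), where $p_i$ is the label of the $i$-th quad of $(A;A)$ (necessarily in $\{1,3,6,8\}$) and $p_{m+1}$ the label of the central column; similarly $(C;D)$ is encoded by $q_1\cdots q_m$ or $q_1\cdots q_mq_{m+1}$. Elementary transformations of $(A;A;C;D)\in NS(n)$: (E1) replace both copies of $A$ by $-A$, or replace $C$ by $-C$, or replace $D$ by $-D$; (E2) replace both copies of $A$ by $A'$, or replace $C$ by $C'$, or $D$ by $D'$; (E3) interchange $C$ and $D$; (E4) replace $(C;D)$ by the pair whose encoding is obtained from that of $(C;D)$ by simultaneously replacing every quad label $4$ by $5$ and every $5$ by $4$ (the central column, if any, unchanged); this again yields an element of $NS(n)$; (E5) replace $(A;A;C;D)$ by $(A^*;A^*;C^*;D^* )$. Two members of $NS(n)$ are equivalent if one is obtained from the other by a finite sequence of elementary transformations. Canonical form: $S=(A;A;C;D)\in NS(n)$ with encodings $p_1p_2\cdots$ of $(A;A)$ and $q_1q_2\cdots$ of $(C;D)$ is in canonical form if: (i) for $n$ even $p_1=1$, and for $n>1$ odd $p_1\in\{1,6\}$; (ii) the first symmetric quad (if any) among $p_1,\dots,p_m$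 is $1$; (iii) the first skew quad (if any) among $p_1,\dots,p_m$ is $6$; (iv) if $n$ is odd and all $p_1,\dots,p_m$ are skew, then $p_{m+1}=0$; (v) if $n$ is odd and $i<m$ is the smallest index such that $p_i,p_{i+1}$ have the same symmetry type, then $p_{i+1}\in\{1,6\}$; if $n$ is odd, there is no such index, and $p_m$ is symmetric, then $p_{m+1}=0$; (vi) $q_1\in\{1,6\}$ if $n>1$; (vii) the first symmetric quad (if any) among $q_1,\dots,q_m$ is $1$; (viii) the first skew quad (if any) among $q_1,\dots,q_m$ is $6$; (ix) if $i$ is the least index with $q_i\in\{2,7\}$ then $q_i=2$; (x) if $i$ is the least index with $q_i\in\{4,5\}$ then $q_i=4$; (xi) if $n$ is odd and $q_i\neq 2$ for all $i\le m$, then $q_{m+1}\neq 2$; (xii) if $n$ is odd and $q_i\neq 1$ for all $i\le m$, then $q_{m+1}=0$. *)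

theory Defs
  imports Main
begin

text \<open>Binary sequences are lists of integers with entries in {1,-1};
  the paper's a_1..a_n is the list a!0 .. a!(n-1).\<close>

definition binary_seq :: "int list \<Rightarrow> bool" where
  "binary_seq A \<longleftrightarrow> set A \<subseteq> {1, -1}"

text \<open>a_k with the convention a_k = 0 for k < 1 or k > n (1-based index k).\<close>
definition entry :: "int list \<Rightarrow> int \<Rightarrow> int" where
  "entry A k = (if 1 \<le> k \<and> k \<le> int (length A) then A ! (nat k - 1) else 0)"

definition NACF :: "int list \<Rightarrow> int \<Rightarrow> int" where
  "NACF A i = (\<Sum>j\<in>{1..int (length A)}. entry A j * entry A (i + j))"

definition negseq :: "int list \<Rightarrow> int list" where
  "negseq A = map uminus A"

definition revseq :: "int list \<Rightarrow> int list" where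
  "revseq A = rev A"

definition altseq :: "int list \<Rightarrow> int list" where
  "altseq A = map (\<lambda>k. (-1) ^ k * A ! k) [0..<length A]"

type_synonym quadruple = "int list \<times> int list \<times> int list \<times> int list"

definition NS :: "nat \<Rightarrow> quadruple set" where
  "NS n = {(A, B, C, D). binary_seq A \<and> binary_seq B \<and> binary_seq C \<and> binary_seq D \<and>
      length A = n \<and> length B = n \<and> length C = n \<and> length D = n \<and> A = B \<and>
      (\<forall>i::int. i \<noteq> 0 \<longrightarrow> 2 * NACF A i + NACF C i + NACF D i = 0)}"

text \<open>Label of the quad [(a,b),(c,d)] (first row (a,b), second row (c,d));
  0 means "not one of the eight labelled quads".\<close>
definition qlabel :: "int \<Rightarrow> int \<Rightarrow> int \<Rightarrow> int \<Rightarrow> nat" where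
  "qlabel a b c d =
     (if (a, b, c, d) = (1, 1, 1, 1) then 1
      else if (a, b, c, d) = (1, 1, -1, -1) then 2
      else if (a, b, c, d) = (-1, 1, -1, 1) then 3
      else if (a, b, c, d) = (1, -1, -1, 1) then 4
      else if (a, b, c, d) = (-1, 1, 1, -1) then 5
      else if (a, b, c, d) = (1, -1, 1, -1) then 6
      else if (a, b, c, d) = (-1, -1, 1, 1) then 7
      else if (a, b, c, d) = (-1, -1, -1, -1) then 8
      else 0)"

text \<open>Label of a central column (a,c)^T; 4 means unlabelled.\<close>
definition clabel :: "int \<Rightarrow> int \<Rightarrow> nat" where
  "clabel a c =
     (if (a, c) = (1, 1) then 0
      else if (a, c) = (1, -1) then 1
      else if (a, c) = (-1, 1) then 2
      else if (a, c) = (-1, -1) then 3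
      else 4)"

text \<open>i-th quad (1 \<le> i \<le> m) of the pair (X;Y): [[x_i, x_(n+1-i)],[y_i, y_(n+1-i)]].\<close>
definition quad :: "int list \<Rightarrow> int list \<Rightarrow> nat \<Rightarrow> nat" where
  "quad X Y i = (let n = length X in
      qlabel (X ! (i - 1)) (X ! (n - i)) (Y ! (i - 1)) (Y ! (n - i)))"

text \<open>Central column (x_(m+1), y_(m+1)) for odd n = 2m+1.\<close>
definition central :: "int list \<Rightarrow> int list \<Rightarrow> nat" where
  "central X Y = (let m = length X div 2 in clabel (X ! m) (Y ! m))"

definition symq :: "nat \<Rightarrow> bool" where
  "symq l \<longleftrightarrow> l \<in> {1, 2, 7, 8}"

definition skewq :: "nat \<Rightarrow> bool" where
  "skewq l \<longleftrightarrow> l \<in> {3, 4, 5, 6}"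

definition same_type :: "nat \<Rightarrow> nat \<Rightarrow> bool" where
  "same_type l l' \<longleftrightarrow> (symq l \<and> symq l') \<or> (skewq l \<and> skewq l')"

text \<open>(E4): quads labelled 4 become 5 and vice versa; this amounts to negating the
  four entries of that quad.  Position k (0-based) belongs to quad min(k+1, n-k).\<close>
definition flip45 :: "int list \<Rightarrow> int list \<Rightarrow> nat \<Rightarrow> bool" where
  "flip45 C D k = (let n = length C; i = min (Suc k) (n - k) in
      1 \<le> i \<and> i \<le> n div 2 \<and> quad C D i \<in> {4, 5})"

definition swap45 :: "int list \<Rightarrow> int list \<Rightarrow> int list \<times> int list" where
  "swap45 C D =
     (map (\<lambda>k. if flip45 C D k then - (C ! k) else C ! k) [0..<length C],
      map (\<lambda>k. if flip45 C D k then - (D ! k) else D ! k) [0..<length D])"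

definition elem_step :: "quadruple \<Rightarrow> quadruple \<Rightarrow> bool" where
  "elem_step S T \<longleftrightarrow> (case S of (A, B, C, D) \<Rightarrow>
      T = (negseq A, negseq B, C, D) \<or> T = (A, B, negseq C, D) \<or> T = (A, B, C, negseq D) \<or>
      T = (revseq A, revseq B, C, D) \<or> T = (A, B, revseq C, D) \<or> T = (A, B, C, revseq D) \<or>
      T = (A, B, D, C) \<or>
      T = (A, B, fst (swap45 C D), snd (swap45 C D)) \<or>
      T = (altseq A, altseq B, altseq C, altseq D))"

definition NS_equiv :: "nat \<Rightarrow> quadruple \<Rightarrow> quadruple \<Rightarrow> bool" where
  "NS_equiv n = (\<lambda>S T. S \<in> NS n \<and> T \<in> NS n \<and> (elem_step S T \<or> elem_step T S))\<^sup>*\<^sup>*"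

definition canonical :: "quadruple \<Rightarrow> bool" where
  "canonical S \<longleftrightarrow> (case S of (A, B, C, D) \<Rightarrow>
    (let n = length A; m = n div 2;
         p = quad A A; q = quad C D; pc = central A A; qc = central C D in
      \<comment> \<open>(i)\<close>
      (even n \<longrightarrow> p 1 = 1) \<and>
      (odd n \<and> n > 1 \<longrightarrow> p 1 \<in> {1, 6}) \<and>
      \<comment> \<open>(ii)\<close>
      (\<forall>i\<in>{1..m}. symq (p i) \<and> (\<forall>j\<in>{1..<i}. \<not> symq (p j)) \<longrightarrow> p i = 1) \<and>
      \<comment> \<open>(iii)\<close>
      (\<forall>i\<in>{1..m}. skewq (p i) \<and> (\<forall>j\<in>{1..<i}. \<not> skewq (p j)) \<longrightarrow> p i = 6) \<and>
      \<comment> \<open>(iv)\<close>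
      (odd n \<and> (\<forall>i\<in>{1..m}. skewq (p i)) \<longrightarrow> pc = 0) \<and>
      \<comment> \<open>(v)\<close>
      (odd n \<longrightarrow>
         (\<forall>i\<in>{1..<m}. same_type (p i) (p (i + 1)) \<and>
              (\<forall>j\<in>{1..<i}. \<not> same_type (p j) (p (j + 1))) \<longrightarrow> p (i + 1) \<in> {1, 6}) \<and>
         ((\<forall>i\<in>{1..<m}. \<not> same_type (p i) (p (i + 1))) \<and> m \<ge> 1 \<and> symq (p m) \<longrightarrow> pc = 0)) \<and>
      \<comment> \<open>(vi)\<close>
      (n > 1 \<longrightarrow> q 1 \<in> {1, 6}) \<and>
      \<comment> \<open>(vii)\<close>
      (\<forall>i\<in>{1..m}. symq (q i) \<and> (\<forall>j\<in>{1..<i}. \<not> symq (q j)) \<longrightarrow> q i = 1) \<and>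
      \<comment> \<open>(viii)\<close>
      (\<forall>i\<in>{1..m}. skewq (q i) \<and> (\<forall>j\<in>{1..<i}. \<not> skewq (q j)) \<longrightarrow> q i = 6) \<and>
      \<comment> \<open>(ix)\<close>
      (\<forall>i\<in>{1..m}. q i \<in> {2, 7} \<and> (\<forall>j\<in>{1..<i}. q j \<notin> {2, 7}) \<longrightarrow> q i = 2) \<and>
      \<comment> \<open>(x)\<close>
      (\<forall>i\<in>{1..m}. q i \<in> {4, 5} \<and> (\<forall>j\<in>{1..<i}. q j \<notin> {4, 5}) \<longrightarrow> q i = 4) \<and>
      \<comment> \<open>(xi)\<close>
      (odd n \<and> (\<forall>i\<in>{1..m}. q i \<noteq> 2) \<longrightarrow> qc \<noteq> 2) \<and>
      \<comment> \<open>(xii)\<close>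
      (odd n \<and> (\<forall>i\<in>{1..m}. q i \<noteq> 1) \<longrightarrow> qc = 0)))"

end

theory Submission
  imports Defs
begin

(* The proof is a normalisation procedure.  First we show that all elementary
   transformations map NS(n) into itself: negation and reversal preserve the
   autocorrelations, alternation multiplies them by (-1)^i, and (E4) preserves
   N_C + N_D.  The last fact rests on the structural property of normal
   sequences c_k c_(n+1-k) = d_k d_(n+1-k), obtained by counting modulo 4; it
   also says that every quad of (C;D) carries one of the eight labels.  Most canonical conditions have the shape "the first quad with a
   given property has a given label", so the normalisation proceeds greedily:
   (C;D) is normalised by negations/reversals of C and D, the swap C <-> D and
   (E4), each step leaving the earlier achieved conditions intact; (A;A) is
   normalised by negation and reversal of A, and for condition (i) resp. (v)
   additionally by one alternation (E5), followed by a parity argument. *)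

lemma NACF_restrict:
  "NACF A i = (\<Sum>j\<in>{1..int (length A)} \<inter> {1-i..int (length A)-i}. entry A j * entry A (i+j))"
  unfolding NACF_def
  by (rule sum.mono_neutral_right) (auto simp: entry_def)

lemma NACF_sym: "NACF A (-i) = NACF A i"
proof -
  let ?n = "int (length A)"
  have "NACF A (-i) = (\<Sum>j\<in>{1..?n} \<inter> {1+i..?n+i}. entry A j * entry A (-i+j))"
    using NACF_restrict[of A "-i"] by simp
  also have "\<dots> = (\<Sum>k\<in>{1..?n} \<inter> {1-i..?n-i}. entry A k * entry A (i+k))"
    by (rule sum.reindex_bij_witness[of _ "\<lambda>k. k+i" "\<lambda>j. j-i"]) (auto simp: algebra_simps)
  also have "\<dots> = NACF A i" using NACF_restrict[of A i] by simp
  finally show ?thesis .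
qed

lemma entry_neg: "entry (negseq A) k = - entry A k"
  by (auto simp: entry_def negseq_def)

lemma NACF_neg: "NACF (negseq A) i = NACF A i"
proof -
  have "length (negseq A) = length A" by (simp add: negseq_def)
  then show ?thesis unfolding NACF_def entry_neg by simp
qed

lemma entry_rev: "entry (revseq A) k = entry A (int (length A) + 1 - k)"
proof -
  have e: "nat (int (length A) + 1) = Suc (length A)" by simp
  show ?thesis by (auto simp: entry_def revseq_def rev_nth e nat_diff_distrib)
qed

lemma NACF_rev: "NACF (revseq A) i = NACF A i"
proof -
  let ?n = "int (length A)"
  have "NACF (revseq A) i = (\<Sum>j\<in>{1..?n}. entry A (?n+1-j) * entry A (?n+1-(i+j)))"
  proof -
    have "length (revseq A) = length A" by (simp add: revseq_def)
    then show ?thesis unfolding NACF_def entry_rev by (simp add: algebra_simps)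
  qed
  also have "\<dots> = (\<Sum>k\<in>{1..?n}. entry A k * entry A (-i+k))"
    by (rule sum.reindex_bij_witness[of _ "\<lambda>k. ?n+1-k" "\<lambda>j. ?n+1-j"]) (auto simp: algebra_simps)
  also have "\<dots> = NACF A (-i)" by (simp add: NACF_def)
  finally show ?thesis by (simp add: NACF_sym)
qed

lemma entry_alt: "entry (altseq A) k = (if even k then -1 else 1) * entry A k"
proof (cases "1 \<le> k \<and> k \<le> int (length A)")
  case True
  then obtain j where j: "k = int j + 1" "j < length A"
  proof -
    show ?thesis using True by (intro that[of "nat (k - 1)"]) auto
  qed
  have "(-1::int)^j = (if even k then -1 else 1)" using j by (auto simp: even_add)
  have e: "nat (int j + 1) = Suc j" by simp
  then show ?thesis using True j \<open>(-1::int)^j = _\<close> by (simp add: entry_def altseq_def e)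
qed (auto simp: entry_def altseq_def)

lemma NACF_alt: "NACF (altseq A) i = (if even i then 1 else -1) * NACF A i"
proof -
  have len: "length (altseq A) = length A" by (simp add: altseq_def)
  have "NACF (altseq A) i = (\<Sum>j\<in>{1..int (length A)}. (if even i then 1 else -1) * (entry A j * entry A (i+j)))"
    unfolding NACF_def len entry_alt by (rule sum.cong) (auto simp: even_add)
  then show ?thesis by (simp add: NACF_def sum_distrib_left)
qed


text \<open>For a shift n - k the
  autocorrelation of a binary sequence is a sum of k products of signs; since
  xy \<equiv> x + y - 1 (mod 4) for signs x, y, the defining identity of NS(n),
  taken modulo 4, constrains the boundary entries of C and D.\<close>

lemma binary_entry:
  "binary_seq A \<Longrightarrow> 1 \<le> k \<Longrightarrow> k \<le> int (length A) \<Longrightarrow> entry A k = 1 \<or> entry A k = -1"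
proof -
  assume a: "binary_seq A" "1 \<le> k" "k \<le> int (length A)"
  then have "nat k - 1 < length A" by linarith
  then have "A ! (nat k - 1) \<in> set A" by (rule nth_mem)
  then have "A ! (nat k - 1) \<in> {1,-1}" using a(1) unfolding binary_seq_def by blast
  then show ?thesis using a unfolding entry_def by auto
qed

lemma NACF_tail:
  assumes "1 \<le> k" "k \<le> int (length A)"
  shows "NACF A (int (length A) - k) = (\<Sum>j\<in>{1..k}. entry A j * entry A (int (length A) - k + j))"
proof -
  have "{1..int (length A)} \<inter> {1 - (int (length A) - k)..int (length A) - (int (length A) - k)} = {1..k}"
    using assms by auto
  then show ?thesis by (subst NACF_restrict) (simp only:)
qed

lemma NACF_tail_mod4:
  assumes "binary_seq A" "1 \<le> k" "k < int (length A)"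
  shows "4 dvd (NACF A (int (length A) - k) - (\<Sum>j\<in>{1..k}. entry A j + entry A (int (length A) - k + j)) + k)"
proof -
  let ?n = "int (length A)"
  have sign_prod: "4 dvd (x * y - x - y + 1)" if "x \<in> {1,-1}" "y \<in> {1,-1}" for x y :: int
    using that by auto
  have "NACF A (?n - k) - (\<Sum>j\<in>{1..k}. entry A j + entry A (?n - k + j)) + k =
        (\<Sum>j\<in>{1..k}. entry A j * entry A (?n - k + j) - entry A j - entry A (?n - k + j) + 1)"
    using assms by (simp add: NACF_tail sum_subtractf sum.distrib)
  moreover have "4 dvd (\<Sum>j\<in>{1..k}. entry A j * entry A (?n - k + j) - entry A j - entry A (?n - k + j) + 1)"
    by (rule dvd_sum, rule sign_prod) (use assms binary_entry[OF assms(1)] in auto)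
  ultimately show ?thesis by simp
qed

lemma twice_NACF_tail_mod4:
  assumes "binary_seq A" "1 \<le> k" "k < int (length A)"
  shows "4 dvd (2 * NACF A (int (length A) - k) - 2 * k)"
proof -
  let ?n = "int (length A)"
  have sign_prod: "4 dvd (2 * (x * y) - 2)" if "x \<in> {1,-1}" "y \<in> {1,-1}" for x y :: int
    using that by auto
  have "2 * NACF A (?n - k) - 2 * k = (\<Sum>j\<in>{1..k}. 2 * (entry A j * entry A (?n - k + j)) - 2)"
    using assms by (simp add: NACF_tail sum_subtractf sum_distrib_left)
  moreover have "4 dvd (\<Sum>j\<in>{1..k}. 2 * (entry A j * entry A (?n - k + j)) - 2)"
    by (rule dvd_sum, rule sign_prod) (use assms binary_entry[OF assms(1)] in auto)
  ultimately show ?thesis by simp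
qed

lemma sum_tail_reindex:
  "(\<Sum>j\<in>{1..k}. f (n - k + j)) = (\<Sum>j\<in>{1..k}. f (n + 1 - j::int))"
  by (rule sum.reindex_bij_witness[of _ "\<lambda>j. k+1-j" "\<lambda>j. k+1-j"]) (auto simp: algebra_simps)

text \<open>Combining the three congruences with 2N_A + N_C + N_D = 0 at shift n - k:
  the sum of the first k and the last k entries of C and D is divisible by 4.\<close>
lemma boundary_sum_div4:
  assumes S: "(A, A, C, D) \<in> NS n" and k: "1 \<le> k" "k < int n"
  shows "4 dvd (\<Sum>j\<in>{1..k}. entry C j + entry D j + entry C (int n + 1 - j) + entry D (int n + 1 - j))"
proof -
  from S have bA: "binary_seq A" and bC: "binary_seq C" and bD: "binary_seq D"
    and l: "length A = n" "length C = n" "length D = n"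
    and eq: "2 * NACF A (int n - k) + NACF C (int n - k) + NACF D (int n - k) = 0"
    using k by (auto simp: NS_def)
  define sC where "sC = (\<Sum>j\<in>{1..k}. entry C j + entry C (int n - k + j))"
  define sD where "sD = (\<Sum>j\<in>{1..k}. entry D j + entry D (int n - k + j))"
  have dC: "4 dvd (NACF C (int n - k) - sC + k)"
    using NACF_tail_mod4[OF bC] k l unfolding sC_def by auto
  have dD: "4 dvd (NACF D (int n - k) - sD + k)"
    using NACF_tail_mod4[OF bD] k l unfolding sD_def by auto
  have dA: "4 dvd (2 * NACF A (int n - k) - 2 * k)"
    using twice_NACF_tail_mod4[OF bA] k l by auto
  have "4 dvd ((NACF C (int n - k) - sC + k) + (NACF D (int n - k) - sD + k)
              + (2 * NACF A (int n - k) - 2 * k))"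
    using dvd_add[OF dvd_add[OF dC dD] dA] .
  also have "(NACF C (int n - k) - sC + k) + (NACF D (int n - k) - sD + k)
              + (2 * NACF A (int n - k) - 2 * k) = - (sC + sD)"
    using eq by linarith
  finally have "4 dvd (sC + sD)" by (metis dvd_minus_iff)
  moreover have "sC + sD =
      (\<Sum>j\<in>{1..k}. entry C j + entry D j + entry C (int n + 1 - j) + entry D (int n + 1 - j))"
    unfolding sC_def sD_def sum.distrib sum_tail_reindex[of "entry C"] sum_tail_reindex[of "entry D"]
    by simp
  ultimately show ?thesis by simp
qed

lemma pm1_sum_div4_prod:
  "(a::int) \<in> {1,-1} \<Longrightarrow> b \<in> {1,-1} \<Longrightarrow> c \<in> {1,-1} \<Longrightarrow> d \<in> {1,-1} \<Longrightarrow>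
   4 dvd (a+b+c+d) \<Longrightarrow> a*c = b*d"
  by (elim insertE emptyE; simp)

text \<open>Structural property: c_k c_(n+1-k) = d_k d_(n+1-k) for 1 \<le> k < n.  Take
  the difference of the boundary sums for k and k - 1 and use that four signs
  with sum divisible by 4 satisfy ac = bd.\<close>
lemma NS_CD_mirror_products:
  assumes S: "(A, A, C, D) \<in> NS n" and k: "1 \<le> k" "k < int n"
  shows "entry C k * entry C (int n + 1 - k) = entry D k * entry D (int n + 1 - k)"
proof -
  define w where "w = (\<lambda>j. entry C j + entry D j + entry C (int n + 1 - j) + entry D (int n + 1 - j))"
  have W: "4 dvd sum w {1..k}" using boundary_sum_div4[OF S k] unfolding w_def .
  have W': "4 dvd sum w {1..k-1}"
  proof (cases "k = 1")
    case False
    then have "1 \<le> k - 1" "k - 1 < int n" using k by auto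
    from boundary_sum_div4[OF S this] show ?thesis unfolding w_def .
  qed simp
  have "{1..k} = insert k {1..k-1}" using k by auto
  then have "sum w {1..k} = w k + sum w {1..k-1}" by simp
  then have "4 dvd w k" using dvd_diff[OF W W'] by simp
  moreover from S have bC: "binary_seq C" and bD: "binary_seq D" and l: "length C = n" "length D = n"
    by (auto simp: NS_def)
  have k2: "1 \<le> int n + 1 - k" "int n + 1 - k \<le> int n" using k by auto
  have "entry C k \<in> {1,-1}" "entry D k \<in> {1,-1}"
    "entry C (int n + 1 - k) \<in> {1,-1}" "entry D (int n + 1 - k) \<in> {1,-1}"
    using binary_entry[OF bC] binary_entry[OF bD] k k2 l by auto
  ultimately show ?thesis using pm1_sum_div4_prod unfolding w_def by blast
qed

lemma qlabel_4: "qlabel x y u v = 4 \<longleftrightarrow> (x = 1 \<and> y = -1 \<and> u = -1 \<and> v = 1)"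
proof
  assume "qlabel x y u v = 4" then show "x = 1 \<and> y = -1 \<and> u = -1 \<and> v = 1"
    unfolding qlabel_def by (simp split: if_split_asm)
qed (simp add: qlabel_def)

lemma qlabel_5: "qlabel x y u v = 5 \<longleftrightarrow> (x = -1 \<and> y = 1 \<and> u = 1 \<and> v = -1)"
proof
  assume "qlabel x y u v = 5" then show "x = -1 \<and> y = 1 \<and> u = 1 \<and> v = -1"
    unfolding qlabel_def by (simp split: if_split_asm)
qed (simp add: qlabel_def)

definition flipped :: "int list \<Rightarrow> int list \<Rightarrow> int \<Rightarrow> bool" where
  "flipped C D k \<longleftrightarrow> 1 \<le> k \<and> k \<le> int (length C) \<and> flip45 C D (nat k - 1)"

lemma entry_nth: "1 \<le> i \<Longrightarrow> i \<le> length X \<Longrightarrow> X ! (i - 1) = entry X (int i)"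
  by (simp add: entry_def)

lemma entry_nth2: "1 \<le> i \<Longrightarrow> i \<le> length X \<Longrightarrow> X ! (length X - i) = entry X (int (length X) + 1 - int i)"
proof -
  assume a: "1 \<le> i" "i \<le> length X"
  then have "nat (int (length X) + 1 - int i) = length X + 1 - i" by auto
  then show ?thesis using a by (simp add: entry_def)
qed

lemma flipped_iff:
  assumes l: "length D = length C" and k: "1 \<le> k" "k \<le> int (length C)"
  shows "flipped C D k \<longleftrightarrow> 2 * k \<noteq> int (length C) + 1 \<and>
     entry C k \<in> {1,-1} \<and> entry C (int (length C) + 1 - k) = - entry C k \<and>
     entry D k = - entry C k \<and> entry D (int (length C) + 1 - k) = entry C k"
proof -
  define n where "n = length C"
  define j where "j = nat k"
  have j: "k = int j" "1 \<le> j" "j \<le> n" using k unfolding n_def j_def by auto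
  have nk: "nat k - 1 = j - 1" using j by simp
  show ?thesis
  proof (cases "j \<le> n + 1 - j")
    case True
    then have mi: "min (Suc (j - 1)) (n - (j - 1)) = j" using j by auto
    have dv: "(1 \<le> j \<and> j \<le> n div 2) \<longleftrightarrow> 2 * k \<noteq> int n + 1" using True j by auto
    show ?thesis unfolding flipped_def flip45_def Let_def quad_def nk n_def[symmetric] mi
      using True j l k entry_nth[of j C] entry_nth[of j D] entry_nth2[of j C] entry_nth2[of j D]
      unfolding n_def[symmetric] dv by (auto simp: qlabel_4 qlabel_5)
  next
    case False
    then have mi: "min (Suc (j - 1)) (n - (j - 1)) = n + 1 - j" using j by auto
    have e1: "int (n + 1 - j) = int n + 1 - k" using j False by auto
    have e2: "int n + 1 - int (n + 1 - j) = k" using j False by auto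
    have dv: "(1 \<le> n + 1 - j \<and> n + 1 - j \<le> n div 2) \<longleftrightarrow> 2 * k \<noteq> int n + 1" using False j by auto
    show ?thesis unfolding flipped_def flip45_def Let_def quad_def nk n_def[symmetric] mi
      using False j l k entry_nth[of "n+1-j" C] entry_nth[of "n+1-j" D] entry_nth2[of "n+1-j" C] entry_nth2[of "n+1-j" D]
      unfolding n_def[symmetric] e1 e2 dv by (auto simp: qlabel_4 qlabel_5)
  qed
qed


text \<open>Entries of the pair produced by (E4), and the behaviour of entries at
  flipped and unflipped positions.  At an unflipped position the structural
  property forces c_(n+1-k) - d_(n+1-k) = c_k - d_k.\<close>

lemma swap45_len: "length (fst (swap45 C D)) = length C" "length (snd (swap45 C D)) = length D"
  by (auto simp: swap45_def)

lemma entry_swap45: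
  assumes l: "length D = length C"
  shows "entry (fst (swap45 C D)) k = (if flipped C D k then -1 else 1) * entry C k"
        "entry (snd (swap45 C D)) k = (if flipped C D k then -1 else 1) * entry D k"
  using l by (auto simp: entry_def swap45_def flipped_def nat_less_iff)

lemma flipped_range: "flipped C D k \<Longrightarrow> 1 \<le> k \<and> k \<le> int (length C)"
  by (simp add: flipped_def)

lemma flipped_mirror:
  assumes l: "length D = length C" and k: "1 \<le> k" "k \<le> int (length C)"
  shows "flipped C D (int (length C) + 1 - k) = flipped C D k"
proof -
  have k2: "1 \<le> int (length C) + 1 - k" "int (length C) + 1 - k \<le> int (length C)" using k by auto
  show ?thesis unfolding flipped_iff[OF l k] flipped_iff[OF l k2] by auto
qed

lemma flipped_entries:
  assumes l: "length D = length C" and f: "flipped C D k"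
  shows "entry C (int (length C) + 1 - k) = - entry C k \<and>
     entry D k = - entry C k \<and> entry D (int (length C) + 1 - k) = - entry D k"
proof -
  have k: "1 \<le> k" "k \<le> int (length C)" using flipped_range[OF f] by auto
  show ?thesis using f unfolding flipped_iff[OF l k] by auto
qed

lemma unflipped_entries:
  assumes S: "(A, A, C, D) \<in> NS n" and k: "1 \<le> k" "k \<le> int n" and nf: "\<not> flipped C D k"
  shows "entry C (int n + 1 - k) - entry D (int n + 1 - k) = entry C k - entry D k"
proof -
  from S have bC: "binary_seq C" and bD: "binary_seq D" and l: "length C = n" "length D = n"
    by (auto simp: NS_def)
  have k2: "1 \<le> int n + 1 - k" "int n + 1 - k \<le> int n" using k by auto
  have c1: "entry C k \<in> {1,-1}" "entry D k \<in> {1,-1}" using binary_entry[OF bC] binary_entry[OF bD] k l by auto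
  have st: "entry C k * entry C (int n + 1 - k) = entry D k * entry D (int n + 1 - k)"
  proof (cases "k < int n")
    case True then show ?thesis using NS_CD_mirror_products[OF S k(1)] by simp
  next
    case False
    then have kn: "k = int n" using k by simp
    show ?thesis
    proof (cases "n = 1")
      case True then show ?thesis using kn c1 by auto
    next
      case False
      then have "1 < int n" using k by auto
      from NS_CD_mirror_products[OF S _ this] kn show ?thesis by (simp add: mult.commute)
    qed
  qed
  have c2: "entry C (int n + 1 - k) \<in> {1,-1}" "entry D (int n + 1 - k) \<in> {1,-1}"
    using binary_entry[OF bC] binary_entry[OF bD] k2 l by auto
  have "\<not> (2 * k \<noteq> int n + 1 \<and>
     entry C k \<in> {1,-1} \<and> entry C (int n + 1 - k) = - entry C k \<and>
     entry D k = - entry C k \<and> entry D (int n + 1 - k) = entry C k)"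
    using nf flipped_iff[of D C k] l k by auto
  show ?thesis
  proof (cases "2 * k = int n + 1")
    case True
    then have "int n + 1 - k = k" by simp
    then show ?thesis by simp
  next
    case False
    then show ?thesis using st c1 c2 \<open>\<not> (_ \<and> _)\<close> by auto
  qed
qed


text \<open>The change of N_C(s) + N_D(s) is a sum over
  pairs (j, s+j) of which exactly one position is flipped; the reflection
  j \<mapsto> n+1-s-j pairs these terms with opposite signs, so they cancel.\<close>

lemma flip_pair_products:
  assumes S: "(A, A, C, D) \<in> NS n" and a: "flipped C D a" and b: "1 \<le> b" "b \<le> int n" "\<not> flipped C D b"
  shows "entry C (int n + 1 - a) * entry C (int n + 1 - b) + entry D (int n + 1 - a) * entry D (int n + 1 - b)
       = - (entry C a * entry C b + entry D a * entry D b)"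
proof -
  from S have l: "length C = n" "length D = n" by (auto simp: NS_def)
  have fa: "entry C (int n + 1 - a) = - entry C a" "entry D a = - entry C a" "entry D (int n + 1 - a) = - entry D a"
    using flipped_entries[OF _ a] l by auto
  have nb: "entry C (int n + 1 - b) = entry D (int n + 1 - b) + entry C b - entry D b"
    using unflipped_entries[OF S b] by simp
  show ?thesis unfolding nb fa(1) fa(3) unfolding fa(2) by (simp add: algebra_simps)
qed

text \<open>The contribution of the pair of positions (j, s+j) to the change of
  N_C(s) + N_D(s) under (E4).  It vanishes unless exactly one of the two
  positions is flipped.\<close>

definition swap45_defect :: "int list \<Rightarrow> int list \<Rightarrow> int \<Rightarrow> int \<Rightarrow> int" where
  "swap45_defect C D s j =
     ((if flipped C D j = flipped C D (s + j) then 1 else -1) - 1) *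
     (entry C j * entry C (s + j) + entry D j * entry D (s + j))"

lemma swap45_defect_reflect:
  assumes S: "(A, A, C, D) \<in> NS n" and a: "1 \<le> j" "j \<le> int n" and b: "1 \<le> s + j" "s + j \<le> int n"
  shows "swap45_defect C D s (int n + 1 - s - j) = - swap45_defect C D s j"
proof -
  from S have l: "length C = n" "length D = n" by (auto simp: NS_def)
  have m1: "int n + 1 - s - j = int n + 1 - (s + j)" and m2: "s + (int n + 1 - s - j) = int n + 1 - j"
    by simp_all
  have fa: "flipped C D (int n + 1 - j) = flipped C D j"
    using flipped_mirror[of D C j] a l by simp
  have fb: "flipped C D (int n + 1 - (s + j)) = flipped C D (s + j)"
    using flipped_mirror[of D C "s + j"] b l by simp
  consider "flipped C D j = flipped C D (s + j)" | "flipped C D j" "\<not> flipped C D (s + j)"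
    | "\<not> flipped C D j" "flipped C D (s + j)" by blast
  then show ?thesis
  proof cases
    case 1
    then show ?thesis unfolding swap45_defect_def m2 unfolding m1 fa fb by simp
  next
    case 2
    then show ?thesis using flip_pair_products[OF S 2(1) b 2(2)]
      unfolding swap45_defect_def m2 unfolding m1 fa fb by (simp add: algebra_simps)
  next
    case 3
    then show ?thesis using flip_pair_products[OF S 3(2) a 3(1)]
      unfolding swap45_defect_def m2 unfolding m1 fa fb by (simp add: algebra_simps)
  qed
qed

lemma swap45_NACF:
  assumes S: "(A, A, C, D) \<in> NS n"
  shows "NACF (fst (swap45 C D)) s + NACF (snd (swap45 C D)) s = NACF C s + NACF D s"
proof -
  from S have l: "length C = n" "length D = n" by (auto simp: NS_def)
  let ?h = "swap45_defect C D s"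
  define J where "J = {1..int n} \<inter> {1-s..int n-s}"
  have lDC: "length D = length C" using l by simp
  let ?C' = "fst (swap45 C D)" and ?D' = "snd (swap45 C D)"
  have "NACF ?C' s + NACF ?D' s - (NACF C s + NACF D s) =
      (\<Sum>j\<in>{1..int n}. entry ?C' j * entry ?C' (s+j) + entry ?D' j * entry ?D' (s+j)
                          - (entry C j * entry C (s+j) + entry D j * entry D (s+j)))"
    unfolding NACF_def swap45_len l by (simp add: sum.distrib sum_subtractf)
  also have "\<dots> = sum ?h {1..int n}"
    by (rule sum.cong[OF refl]) (simp add: entry_swap45[OF lDC] swap45_defect_def algebra_simps)
  also have "\<dots> = sum ?h J"
    unfolding J_def by (rule sum.mono_neutral_right) (auto simp: swap45_defect_def entry_def l)
  also have "sum ?h J = 0"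
  proof -
    have "sum ?h J = sum (\<lambda>j. ?h (int n + 1 - s - j)) J"
      unfolding J_def
      by (rule sum.reindex_bij_witness[of _ "\<lambda>j. int n + 1 - s - j" "\<lambda>j. int n + 1 - s - j"]) auto
    also have "\<dots> = - sum ?h J"
      using swap45_defect_reflect[OF S] by (simp add: J_def sum_negf[symmetric])
    finally show ?thesis by simp
  qed
  finally show ?thesis by simp
qed


lemma bin_neg: "binary_seq A \<Longrightarrow> binary_seq (negseq A)"
  by (auto simp: binary_seq_def negseq_def)

lemma bin_rev: "binary_seq A \<Longrightarrow> binary_seq (revseq A)"
  by (auto simp: binary_seq_def revseq_def)

lemma bin_iff: "binary_seq A \<longleftrightarrow> (\<forall>k<length A. A ! k = 1 \<or> A ! k = -1)"
proof
  assume "binary_seq A"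
  then show "\<forall>k<length A. A ! k = 1 \<or> A ! k = -1" unfolding binary_seq_def using nth_mem by blast
next
  assume "\<forall>k<length A. A ! k = 1 \<or> A ! k = -1"
  then show "binary_seq A" unfolding binary_seq_def by (auto simp: in_set_conv_nth)
qed

lemma bin_alt: "binary_seq A \<Longrightarrow> binary_seq (altseq A)"
  unfolding bin_iff altseq_def
proof (intro allI impI, simp)
  fix k assume "\<forall>k<length A. A ! k = 1 \<or> A ! k = -1" "k < length A"
  then have "A ! k = 1 \<or> A ! k = -1" by blast
  moreover have "(-1::int) ^ k = 1 \<or> (-1::int) ^ k = -1" by (cases "even k") auto
  ultimately show "(-1) ^ k * A ! k = 1 \<or> (-1) ^ k * A ! k = -1" by auto
qed

lemma bin_swap45: "binary_seq C \<Longrightarrow> binary_seq D \<Longrightarrow> length D = length C \<Longrightarrow>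
   binary_seq (fst (swap45 C D)) \<and> binary_seq (snd (swap45 C D))"
  unfolding bin_iff swap45_def by auto

lemma len_ops: "length (negseq A) = length A" "length (revseq A) = length A" "length (altseq A) = length A"
  by (auto simp: negseq_def revseq_def altseq_def)

lemma NS_iff: "(A, B, C, D) \<in> NS n \<longleftrightarrow> binary_seq A \<and> binary_seq C \<and> binary_seq D \<and>
      length A = n \<and> length C = n \<and> length D = n \<and> B = A \<and>
      (\<forall>i::int. i \<noteq> 0 \<longrightarrow> 2 * NACF A i + NACF C i + NACF D i = 0)"
  unfolding NS_def by auto

lemma elem_step_NS:
  assumes S: "S \<in> NS n" and st: "elem_step S T"
  shows "T \<in> NS n"
proof -
  obtain A C D where SS: "S = (A, A, C, D)" using S by (cases S) (auto simp: NS_def)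
  have SA: "(A, A, C, D) \<in> NS n" using S SS by simp
  note NS = SA[unfolded NS_iff]
  from st consider
      "T = (negseq A, negseq A, C, D)" | "T = (A, A, negseq C, D)" | "T = (A, A, C, negseq D)"
    | "T = (revseq A, revseq A, C, D)" | "T = (A, A, revseq C, D)" | "T = (A, A, C, revseq D)"
    | "T = (A, A, D, C)" | "T = (A, A, fst (swap45 C D), snd (swap45 C D))"
    | "T = (altseq A, altseq A, altseq C, altseq D)"
    unfolding SS elem_step_def prod.case by blast
  then show ?thesis
  proof cases
    case 7
    then show ?thesis using NS by (auto simp: NS_iff ac_simps)
  next
    case 8
    obtain C' D' where sw: "swap45 C D = (C', D')" by (cases "swap45 C D") auto
    have "NACF C' i + NACF D' i = NACF C i + NACF D i" for i
      using swap45_NACF[OF SA, of i] sw by simp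
    moreover have "binary_seq C'" "binary_seq D'" "length C' = n" "length D' = n"
      using NS bin_swap45[of C D] swap45_len[of C D] sw by auto
    ultimately show ?thesis using 8 NS sw by (auto simp: NS_iff add.assoc)
  next
    case 9
    have "2 * NACF (altseq A) i + NACF (altseq C) i + NACF (altseq D) i =
       (if even i then 1 else -1) * (2 * NACF A i + NACF C i + NACF D i)" for i
      by (simp add: NACF_alt algebra_simps)
    then show ?thesis using 9 NS by (simp add: NS_iff bin_alt len_ops)
  qed (use NS in \<open>simp_all add: NS_iff bin_neg bin_rev len_ops NACF_neg NACF_rev\<close>)
qed

lemma equiv_trans: "NS_equiv n S T \<Longrightarrow> NS_equiv n T U \<Longrightarrow> NS_equiv n S U"
  unfolding NS_equiv_def by (rule rtranclp_trans)

lemma equiv_refl: "NS_equiv n S S"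
  unfolding NS_equiv_def by simp

lemma elem_step_equiv: "S \<in> NS n \<Longrightarrow> elem_step S T \<Longrightarrow> T \<in> NS n \<and> NS_equiv n S T"
  using elem_step_NS[of S n T] unfolding NS_equiv_def by (auto intro: r_into_rtranclp)

lemma step_negA: "(A,A,C,D) \<in> NS n \<Longrightarrow>
    (negseq A, negseq A, C, D) \<in> NS n \<and> NS_equiv n (A,A,C,D) (negseq A, negseq A, C, D)"
  by (rule elem_step_equiv) (auto simp: elem_step_def)

lemma step_revA: "(A,A,C,D) \<in> NS n \<Longrightarrow>
    (revseq A, revseq A, C, D) \<in> NS n \<and> NS_equiv n (A,A,C,D) (revseq A, revseq A, C, D)"
  by (rule elem_step_equiv) (auto simp: elem_step_def)

lemma step_negC: "(A,A,C,D) \<in> NS n \<Longrightarrow>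
    (A, A, negseq C, D) \<in> NS n \<and> NS_equiv n (A,A,C,D) (A, A, negseq C, D)"
  by (rule elem_step_equiv) (auto simp: elem_step_def)

lemma step_negD: "(A,A,C,D) \<in> NS n \<Longrightarrow>
    (A, A, C, negseq D) \<in> NS n \<and> NS_equiv n (A,A,C,D) (A, A, C, negseq D)"
  by (rule elem_step_equiv) (auto simp: elem_step_def)

lemma step_revC: "(A,A,C,D) \<in> NS n \<Longrightarrow>
    (A, A, revseq C, D) \<in> NS n \<and> NS_equiv n (A,A,C,D) (A, A, revseq C, D)"
  by (rule elem_step_equiv) (auto simp: elem_step_def)

lemma step_revD: "(A,A,C,D) \<in> NS n \<Longrightarrow>
    (A, A, C, revseq D) \<in> NS n \<and> NS_equiv n (A,A,C,D) (A, A, C, revseq D)"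
  by (rule elem_step_equiv) (auto simp: elem_step_def)

lemma step_swapCD: "(A,A,C,D) \<in> NS n \<Longrightarrow>
    (A, A, D, C) \<in> NS n \<and> NS_equiv n (A,A,C,D) (A, A, D, C)"
  by (rule elem_step_equiv) (auto simp: elem_step_def)

lemma step_swap45: "(A,A,C,D) \<in> NS n \<Longrightarrow>
    (A, A, fst (swap45 C D), snd (swap45 C D)) \<in> NS n \<and>
    NS_equiv n (A,A,C,D) (A, A, fst (swap45 C D), snd (swap45 C D))"
  by (rule elem_step_equiv) (auto simp: elem_step_def)

lemma step_alt: "(A,A,C,D) \<in> NS n \<Longrightarrow>
    (altseq A, altseq A, altseq C, altseq D) \<in> NS n \<and>
    NS_equiv n (A,A,C,D) (altseq A, altseq A, altseq C, altseq D)"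
  by (rule elem_step_equiv) (auto simp: elem_step_def)


definition lab_negC :: "nat \<Rightarrow> nat" where
  "lab_negC l = (if l = 1 then 7 else if l = 7 then 1 else if l = 2 then 8 else if l = 8 then 2
     else if l = 3 then 4 else if l = 4 then 3 else if l = 5 then 6 else if l = 6 then 5 else l)"
definition lab_negD :: "nat \<Rightarrow> nat" where
  "lab_negD l = (if l = 1 then 2 else if l = 2 then 1 else if l = 7 then 8 else if l = 8 then 7
     else if l = 3 then 5 else if l = 5 then 3 else if l = 4 then 6 else if l = 6 then 4 else l)"
definition lab_revC :: "nat \<Rightarrow> nat" where
  "lab_revC l = (if l = 3 then 4 else if l = 4 then 3 else if l = 5 then 6 else if l = 6 then 5 else l)"
definition lab_revD :: "nat \<Rightarrow> nat" where
  "lab_revD l = (if l = 3 then 5 else if l = 5 then 3 else if l = 4 then 6 else if l = 6 then 4 else l)"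
definition lab_swapCD :: "nat \<Rightarrow> nat" where
  "lab_swapCD l = (if l = 2 then 7 else if l = 7 then 2 else if l = 4 then 5 else if l = 5 then 4 else l)"
definition lab_swap45 :: "nat \<Rightarrow> nat" where
  "lab_swap45 l = (if l = 4 then 5 else if l = 5 then 4 else l)"
definition lab_negA :: "nat \<Rightarrow> nat" where
  "lab_negA l = (if l = 1 then 8 else if l = 8 then 1 else if l = 3 then 6 else if l = 6 then 3
     else if l = 2 then 7 else if l = 7 then 2 else if l = 4 then 5 else if l = 5 then 4 else l)"
definition lab_revA :: "nat \<Rightarrow> nat" where
  "lab_revA l = (if l = 3 then 6 else if l = 6 then 3 else if l = 4 then 5 else if l = 5 then 4 else l)"
definition lab_alt1 :: "nat \<Rightarrow> nat" where
  "lab_alt1 l = (if l = 1 then 6 else if l = 6 then 1 else if l = 3 then 8 else if l = 8 then 3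
     else if l = 2 then 4 else if l = 4 then 2 else if l = 5 then 7 else if l = 7 then 5 else l)"

definition col_negC :: "nat \<Rightarrow> nat" where
  "col_negC c = (if c = 0 then 2 else if c = 2 then 0 else if c = 1 then 3 else if c = 3 then 1 else c)"
definition col_negD :: "nat \<Rightarrow> nat" where
  "col_negD c = (if c = 0 then 1 else if c = 1 then 0 else if c = 2 then 3 else if c = 3 then 2 else c)"
definition col_swapCD :: "nat \<Rightarrow> nat" where
  "col_swapCD c = (if c = 1 then 2 else if c = 2 then 1 else c)"
definition col_negA :: "nat \<Rightarrow> nat" where
  "col_negA c = (if c = 0 then 3 else if c = 3 then 0 else if c = 1 then 2 else if c = 2 then 1 else c)"

lemma pm1_cases: "(a::int) \<in> {1,-1} \<Longrightarrow> (a = 1 \<Longrightarrow> P) \<Longrightarrow> (a = -1 \<Longrightarrow> P) \<Longrightarrow> P"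
  by auto

lemmas label_defs = qlabel_def lab_negC_def lab_negD_def lab_revC_def lab_revD_def lab_swapCD_def lab_swap45_def lab_negA_def lab_revA_def lab_alt1_def
  clabel_def col_negC_def col_negD_def col_swapCD_def col_negA_def

lemma qlabel_negC: "a \<in> {1,-1} \<Longrightarrow> b \<in> {1,-1} \<Longrightarrow> c \<in> {1,-1} \<Longrightarrow> d \<in> {1,-1} \<Longrightarrow>
  qlabel (-a) (-b) c d = lab_negC (qlabel a b c d)"
  by (elim pm1_cases; simp add: label_defs)
lemma qlabel_negD: "a \<in> {1,-1} \<Longrightarrow> b \<in> {1,-1} \<Longrightarrow> c \<in> {1,-1} \<Longrightarrow> d \<in> {1,-1} \<Longrightarrow>
  qlabel a b (-c) (-d) = lab_negD (qlabel a b c d)"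
  by (elim pm1_cases; simp add: label_defs)
lemma qlabel_revC: "a \<in> {1,-1} \<Longrightarrow> b \<in> {1,-1} \<Longrightarrow> c \<in> {1,-1} \<Longrightarrow> d \<in> {1,-1} \<Longrightarrow>
  qlabel b a c d = lab_revC (qlabel a b c d)"
  by (elim pm1_cases; simp add: label_defs)
lemma qlabel_revD: "a \<in> {1,-1} \<Longrightarrow> b \<in> {1,-1} \<Longrightarrow> c \<in> {1,-1} \<Longrightarrow> d \<in> {1,-1} \<Longrightarrow>
  qlabel a b d c = lab_revD (qlabel a b c d)"
  by (elim pm1_cases; simp add: label_defs)
lemma qlabel_swapCD: "a \<in> {1,-1} \<Longrightarrow> b \<in> {1,-1} \<Longrightarrow> c \<in> {1,-1} \<Longrightarrow> d \<in> {1,-1} \<Longrightarrow>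
  qlabel c d a b = lab_swapCD (qlabel a b c d)"
  by (elim pm1_cases; simp add: label_defs)
lemma qlabel_swap45: "a \<in> {1,-1} \<Longrightarrow> b \<in> {1,-1} \<Longrightarrow> c \<in> {1,-1} \<Longrightarrow> d \<in> {1,-1} \<Longrightarrow>
  qlabel (if qlabel a b c d \<in> {4,5} then -a else a) (if qlabel a b c d \<in> {4,5} then -b else b)
         (if qlabel a b c d \<in> {4,5} then -c else c) (if qlabel a b c d \<in> {4,5} then -d else d) = lab_swap45 (qlabel a b c d)"
  by (elim pm1_cases; simp add: label_defs)
lemma qlabel_negA: "a \<in> {1,-1} \<Longrightarrow> b \<in> {1,-1} \<Longrightarrow> qlabel (-a) (-b) (-a) (-b) = lab_negA (qlabel a b a b)"
  by (elim pm1_cases; simp add: label_defs)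
lemma qlabel_revA: "a \<in> {1,-1} \<Longrightarrow> b \<in> {1,-1} \<Longrightarrow> qlabel b a b a = lab_revA (qlabel a b a b)"
  by (elim pm1_cases; simp add: label_defs)
lemma qlabel_alt1: "a \<in> {1,-1} \<Longrightarrow> b \<in> {1,-1} \<Longrightarrow> qlabel a (-b) a (-b) = lab_alt1 (qlabel a b a b)"
  by (elim pm1_cases; simp add: label_defs)
lemma qlabel_A_range: "a \<in> {1,-1} \<Longrightarrow> b \<in> {1,-1} \<Longrightarrow> qlabel a b a b \<in> {1,3,6,8}"
  by (elim pm1_cases; simp add: label_defs)

lemma clabel_negC: "a \<in> {1,-1} \<Longrightarrow> c \<in> {1,-1} \<Longrightarrow> clabel (-a) c = col_negC (clabel a c)"
  by (elim pm1_cases; simp add: label_defs)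
lemma clabel_negD: "a \<in> {1,-1} \<Longrightarrow> c \<in> {1,-1} \<Longrightarrow> clabel a (-c) = col_negD (clabel a c)"
  by (elim pm1_cases; simp add: label_defs)
lemma clabel_swapCD: "a \<in> {1,-1} \<Longrightarrow> c \<in> {1,-1} \<Longrightarrow> clabel c a = col_swapCD (clabel a c)"
  by (elim pm1_cases; simp add: label_defs)
lemma clabel_negA: "a \<in> {1,-1} \<Longrightarrow> clabel (-a) (-a) = col_negA (clabel a a)"
  by (elim pm1_cases; simp add: label_defs)
lemma clabel_A_range: "a \<in> {1,-1} \<Longrightarrow> clabel a a \<in> {0,3}"
  by (elim pm1_cases; simp add: label_defs)


lemma bin_mem: "binary_seq X \<Longrightarrow> k < length X \<Longrightarrow> X ! k \<in> {1,-1}"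
  unfolding binary_seq_def using nth_mem by blast

lemma quad_index_bounds: "1 \<le> i \<Longrightarrow> i \<le> (n::nat) div 2 \<Longrightarrow> i - 1 < n \<and> n - i < n"
  by auto

lemma rev_idx: "1 \<le> i \<Longrightarrow> i \<le> length X div 2 \<Longrightarrow>
   revseq X ! (i - 1) = X ! (length X - i) \<and> revseq X ! (length X - i) = X ! (i - 1)"
  by (auto simp: revseq_def rev_nth Suc_diff_le)

context
  fixes C D :: "int list" and i :: nat
  assumes bC: "binary_seq C" and bD: "binary_seq D" and l: "length D = length C"
    and i: "1 \<le> i" "i \<le> length C div 2"
begin

private lemma mems: "C ! (i - 1) \<in> {1,-1}" "C ! (length C - i) \<in> {1,-1}"
   "D ! (i - 1) \<in> {1,-1}" "D ! (length C - i) \<in> {1,-1}"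
  using bin_mem[OF bC] bin_mem[OF bD] quad_index_bounds[OF i] l by auto

lemma quad_negC: "quad (negseq C) D i = lab_negC (quad C D i)"
  using qlabel_negC[OF mems] quad_index_bounds[OF i] by (simp add: Let_def quad_def negseq_def)
lemma quad_negD: "quad C (negseq D) i = lab_negD (quad C D i)"
  using qlabel_negD[OF mems] quad_index_bounds[OF i] l by (simp add: Let_def quad_def negseq_def)
lemma quad_revC: "quad (revseq C) D i = lab_revC (quad C D i)"
  using qlabel_revC[OF mems] rev_idx[OF i] by (simp add: Let_def quad_def len_ops)
lemma quad_revD: "quad C (revseq D) i = lab_revD (quad C D i)"
  using qlabel_revD[OF mems] rev_idx[of i D] i l by (simp add: Let_def quad_def)
lemma quad_swapCD: "quad D C i = lab_swapCD (quad C D i)"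
  using qlabel_swapCD[OF mems] l by (simp add: Let_def quad_def)
lemma quad_swap45: "quad (fst (swap45 C D)) (snd (swap45 C D)) i = lab_swap45 (quad C D i)"
proof -
  have h: "i \<le> Suc (length C) - i" "\<not> Suc (length C - i) \<le> i" using i by presburger+
  have f1: "flip45 C D (i - 1) = (quad C D i \<in> {4,5})"
    using i h by (simp add: flip45_def Let_def min_def)
  have f2: "flip45 C D (length C - i) = (quad C D i \<in> {4,5})"
    using i h by (simp add: flip45_def Let_def min_def)
  define F where "F = (quad C D i \<in> {4,5})"
  have q: "quad C D i = qlabel (C ! (i - 1)) (C ! (length C - i)) (D ! (i - 1)) (D ! (length C - i))"
    by (simp add: quad_def Let_def)
  have "quad (fst (swap45 C D)) (snd (swap45 C D)) i =
    qlabel (if F then - C ! (i - 1) else C ! (i - 1)) (if F then - C ! (length C - i) else C ! (length C - i))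
       (if F then - D ! (i - 1) else D ! (i - 1)) (if F then - D ! (length C - i) else D ! (length C - i))"
    unfolding quad_def[of "fst _"] using quad_index_bounds[OF i] l f1 f2 unfolding F_def[symmetric]
    by (simp add: swap45_def Let_def)
  also have "\<dots> = lab_swap45 (quad C D i)"
    unfolding F_def q by (rule qlabel_swap45[OF mems])
  finally show ?thesis .
qed

end

context
  fixes A :: "int list" and i :: nat
  assumes bA: "binary_seq A" and i: "1 \<le> i" "i \<le> length A div 2"
begin

private lemma memsA: "A ! (i - 1) \<in> {1,-1}" "A ! (length A - i) \<in> {1,-1}"
  using bin_mem[OF bA] quad_index_bounds[OF i] by auto

lemma quad_negA: "quad (negseq A) (negseq A) i = lab_negA (quad A A i)"
  using qlabel_negA[OF memsA] quad_index_bounds[OF i] by (simp add: Let_def quad_def negseq_def)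
lemma quad_revA: "quad (revseq A) (revseq A) i = lab_revA (quad A A i)"
  using qlabel_revA[OF memsA] rev_idx[OF i] by (simp add: Let_def quad_def len_ops)
lemma quad_A_range: "quad A A i \<in> {1,3,6,8}"
  using qlabel_A_range[OF memsA] by (simp add: Let_def quad_def)
lemma quad_altA_odd: "odd (length A) \<Longrightarrow> quad (altseq A) (altseq A) i = (if even i then lab_negA (quad A A i) else quad A A i)"
proof -
  assume o: "odd (length A)"
  have p1: "(-1::int) ^ (i - 1) = (if even i then -1 else 1)" using i by (cases i) auto
  have p2: "(-1::int) ^ (length A - i) = (if even i then -1 else 1)"
  proof -
    have "even (length A - i) = odd i" using o i by auto
    then show ?thesis by (cases "even i") auto
  qed
  show ?thesis using qlabel_negA[OF memsA] quad_index_bounds[OF i] p1 p2 by (simp add: Let_def quad_def altseq_def len_ops)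
qed
lemma quad_altA_even1: "even (length A) \<Longrightarrow> i = 1 \<Longrightarrow> quad (altseq A) (altseq A) i = lab_alt1 (quad A A i)"
proof -
  assume e: "even (length A)" and i1: "i = 1"
  have p2: "(-1::int) ^ (length A - 1) = -1" using e i by auto
  show ?thesis using qlabel_alt1[OF memsA] quad_index_bounds[OF i] p2 i1 by (simp add: Let_def quad_def altseq_def len_ops)
qed

end


lemma odd_mid: "odd (length X) \<Longrightarrow> length X div 2 < length X \<and> length X - Suc (length X div 2) = length X div 2"
  by presburger

context
  fixes C D :: "int list"
  assumes bC: "binary_seq C" and bD: "binary_seq D" and l: "length D = length C" and o: "odd (length C)"
begin

private lemma cmems: "C ! (length C div 2) \<in> {1,-1}" "D ! (length C div 2) \<in> {1,-1}"
  using bin_mem[OF bC] bin_mem[OF bD] odd_mid[OF o] l by auto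

lemma central_negC: "central (negseq C) D = col_negC (central C D)"
  using clabel_negC[OF cmems] odd_mid[OF o] by (simp add: central_def Let_def negseq_def)
lemma central_negD: "central C (negseq D) = col_negD (central C D)"
  using clabel_negD[OF cmems] odd_mid[OF o] l by (simp add: central_def Let_def negseq_def)
lemma central_revC: "central (revseq C) D = central C D"
  using odd_mid[OF o] by (simp add: central_def Let_def revseq_def rev_nth)
lemma central_revD: "central C (revseq D) = central C D"
  using odd_mid[OF o] l by (simp add: central_def Let_def revseq_def rev_nth)
lemma central_swapCD: "central D C = col_swapCD (central C D)"
  using clabel_swapCD[OF cmems] l by (simp add: central_def Let_def)
lemma central_swap45: "central (fst (swap45 C D)) (snd (swap45 C D)) = central C D"
proof -
  have h: "Suc (length C div 2) \<le> length C - length C div 2" using o by presburger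
  have "\<not> flip45 C D (length C div 2)" using o h by (simp add: flip45_def Let_def min_def)
  then show ?thesis using odd_mid[OF o] l by (simp add: central_def Let_def swap45_def)
qed

end

context
  fixes A :: "int list"
  assumes bA: "binary_seq A" and o: "odd (length A)"
begin

private lemma cmemA: "A ! (length A div 2) \<in> {1,-1}"
  using bin_mem[OF bA] odd_mid[OF o] by auto

lemma central_negA: "central (negseq A) (negseq A) = col_negA (central A A)"
  using clabel_negA[OF cmemA] odd_mid[OF o] by (simp add: central_def Let_def negseq_def)
lemma central_revA: "central (revseq A) (revseq A) = central A A"
  using odd_mid[OF o] by (simp add: central_def Let_def revseq_def rev_nth)
lemma central_A_range: "central A A \<in> {0,3}"
  using clabel_A_range[OF cmemA] by (simp add: central_def Let_def)
lemma central_altA: "central (altseq A) (altseq A) = (if odd (length A div 2) then col_negA (central A A) else central A A)"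
  using clabel_negA[OF cmemA] odd_mid[OF o] by (simp add: central_def Let_def altseq_def len_ops)

end

text \<open>All canonical conditions except (i), (v), (vi), (xi), (xii) say: the first
  quad (among 1..m) with property P carries label v.  Such a condition
  survives a relabelling that preserves P and fixes v, and is established by a
  relabelling that preserves P and sends the current first label to v.\<close>

definition first_label :: "nat \<Rightarrow> (nat \<Rightarrow> bool) \<Rightarrow> nat \<Rightarrow> (nat \<Rightarrow> nat) \<Rightarrow> bool" where
  "first_label m P v q \<longleftrightarrow> (\<forall>i\<in>{1..m}. P (q i) \<and> (\<forall>j\<in>{1..<i}. \<not> P (q j)) \<longrightarrow> q i = v)"

definition is_first :: "nat \<Rightarrow> (nat \<Rightarrow> bool) \<Rightarrow> (nat \<Rightarrow> nat) \<Rightarrow> nat \<Rightarrow> bool" where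
  "is_first m P q i \<longleftrightarrow> i \<in> {1..m} \<and> P (q i) \<and> (\<forall>j\<in>{1..<i}. \<not> P (q j))"

lemma is_first_exists: "\<exists>i\<in>{1..m}. P (q i) \<Longrightarrow> \<exists>i. is_first m P q i"
proof -
  assume "\<exists>i\<in>{1..m}. P (q i)"
  then obtain i where i: "i \<in> {1..m}" "P (q i)" by blast
  define i0 where "i0 = (LEAST i. i \<in> {1..m} \<and> P (q i))"
  have "i0 \<in> {1..m} \<and> P (q i0)" unfolding i0_def by (rule LeastI[of _ i]) (use i in auto)
  moreover have "\<forall>j\<in>{1..<i0}. \<not> P (q j)"
  proof (intro ballI notI)
    fix j assume j: "j \<in> {1..<i0}" "P (q j)"
    have jm: "j \<in> {1..m} \<and> P (q j)" using j \<open>i0 \<in> {1..m} \<and> P (q i0)\<close> by auto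
    have "i0 \<le> j" unfolding i0_def by (rule Least_le) (rule jm)
    then show False using j by auto
  qed
  ultimately show ?thesis unfolding is_first_def by blast
qed

lemma is_first_cases: "(\<forall>i\<in>{1..m}. \<not> P (q i)) \<or> (\<exists>i. is_first m P q i)"
  using is_first_exists by blast

lemma is_first_unique: "is_first m P q i \<Longrightarrow> is_first m P q j \<Longrightarrow> i = j"
proof -
  assume a: "is_first m P q i" "is_first m P q j"
  show "i = j"
  proof (rule linorder_cases[of i j])
    assume "i < j" then show ?thesis using a unfolding is_first_def by auto
  next
    assume "j < i" then show ?thesis using a unfolding is_first_def by auto
  qed
qed

lemma first_label_iff: "first_label m P v q \<longleftrightarrow> (\<forall>i. is_first m P q i \<longrightarrow> q i = v)"
  unfolding first_label_def is_first_def by blast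

lemma is_first_cong: "(\<And>x. P (f x) = P x) \<Longrightarrow> (\<forall>i\<in>{1..m}. q' i = f (q i)) \<Longrightarrow> is_first m P q' i = is_first m P q i"
  unfolding is_first_def by (metis (no_types, lifting) atLeastAtMost_iff atLeastLessThan_iff less_imp_le_nat order_trans)

lemma first_label_preserved:
  assumes "\<And>x. P (f x) = P x" "f v = v" "\<forall>i\<in>{1..m}. q' i = f (q i)" "first_label m P v q"
  shows "first_label m P v q'"
  unfolding first_label_iff
proof (intro allI impI)
  fix i assume a: "is_first m P q' i"
  then have "is_first m P q i" using is_first_cong[of P f m q' q i] assms(1,3) by blast
  then have "q i = v" using assms(4) unfolding first_label_iff by blast
  moreover have "i \<in> {1..m}" using a unfolding is_first_def by blast
  ultimately show "q' i = v" using assms(2,3) by auto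
qed

lemma first_label_established:
  assumes "\<And>x. P (f x) = P x" "\<forall>i\<in>{1..m}. q' i = f (q i)" "\<And>i. is_first m P q i \<Longrightarrow> f (q i) = v"
  shows "first_label m P v q'"
  unfolding first_label_iff
proof (intro allI impI)
  fix i assume a: "is_first m P q' i"
  then have "is_first m P q i" using is_first_cong[of P f m q' q i] assms(1,2) by blast
  then have "f (q i) = v" using assms(3) by blast
  moreover have "i \<in> {1..m}" using a unfolding is_first_def by blast
  ultimately show "q' i = v" using assms(2) by auto
qed

lemma first_label_vacuous: "(\<forall>i\<in>{1..m}. \<not> P (q i)) \<Longrightarrow> first_label m P v q"
  unfolding first_label_def by auto

lemma first_label_at_1: "first_label m P v q \<Longrightarrow> 1 \<le> m \<Longrightarrow> P (q 1) \<Longrightarrow> q 1 = v"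
  unfolding first_label_def by auto

lemma first_label_witness: "first_label m P v q \<Longrightarrow> \<exists>i\<in>{1..m}. P (q i) \<Longrightarrow> \<exists>i\<in>{1..m}. q i = v"
proof -
  assume v: "first_label m P v q" and "\<exists>i\<in>{1..m}. P (q i)"
  then obtain i where "is_first m P q i" using is_first_exists by blast
  then show "\<exists>i\<in>{1..m}. q i = v" using v unfolding first_label_iff is_first_def by blast
qed





definition CD_move :: "nat \<Rightarrow> int list \<Rightarrow> int list \<Rightarrow> int list \<Rightarrow> int list \<Rightarrow> int list \<Rightarrow> (nat \<Rightarrow> nat) \<Rightarrow> (nat \<Rightarrow> nat) \<Rightarrow> bool" where
  "CD_move n A C D C' D' f fc \<longleftrightarrow> (A,A,C',D') \<in> NS n \<and> NS_equiv n (A,A,C,D) (A,A,C',D') \<and>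
     (\<forall>i\<in>{1..n div 2}. quad C' D' i = f (quad C D i)) \<and> (odd n \<longrightarrow> central C' D' = fc (central C D))"

lemma CD_move_refl: "(A,A,C,D) \<in> NS n \<Longrightarrow> CD_move n A C D C D id id"
  by (simp add: CD_move_def equiv_refl)

lemma CD_move_trans: "CD_move n A C D C1 D1 f fc \<Longrightarrow> CD_move n A C1 D1 C2 D2 g gc \<Longrightarrow> CD_move n A C D C2 D2 (g \<circ> f) (gc \<circ> fc)"
  unfolding CD_move_def using equiv_trans by auto

context
  fixes n A C D
  assumes S: "(A,A,C,D) \<in> NS n"
begin

private lemma facts: "binary_seq C" "binary_seq D" "length C = n" "length D = n"
  using S by (auto simp: NS_iff)

lemma CD_move_negC: "CD_move n A C D (negseq C) D lab_negC col_negC"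
  unfolding CD_move_def using step_negC[OF S] quad_negC[OF facts(1,2)] central_negC[OF facts(1,2)] facts
  by auto
lemma CD_move_negD: "CD_move n A C D C (negseq D) lab_negD col_negD"
  unfolding CD_move_def using step_negD[OF S] quad_negD[OF facts(1,2)] central_negD[OF facts(1,2)] facts
  by auto
lemma CD_move_revC: "CD_move n A C D (revseq C) D lab_revC id"
  unfolding CD_move_def using step_revC[OF S] quad_revC[OF facts(1,2)] central_revC[OF facts(1,2)] facts
  by auto
lemma CD_move_revD: "CD_move n A C D C (revseq D) lab_revD id"
  unfolding CD_move_def using step_revD[OF S] quad_revD[OF facts(1,2)] central_revD[OF facts(1,2)] facts
  by auto
lemma CD_move_swapCD: "CD_move n A C D D C lab_swapCD col_swapCD"
  unfolding CD_move_def using step_swapCD[OF S] quad_swapCD[OF facts(1,2)] central_swapCD[OF facts(1,2)] facts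
  by auto
lemma CD_move_swap45: "CD_move n A C D (fst (swap45 C D)) (snd (swap45 C D)) lab_swap45 id"
  unfolding CD_move_def using step_swap45[OF S] quad_swap45[OF facts(1,2)] central_swap45[OF facts(1,2)] facts
  by auto

end

lemma CD_move_NS: "CD_move n A C D C' D' f fc \<Longrightarrow> (A,A,C',D') \<in> NS n"
  by (simp add: CD_move_def)

lemma CD_move_negrevC: "(A,A,C,D) \<in> NS n \<Longrightarrow> \<exists>C' D'. CD_move n A C D C' D' (lab_revC \<circ> lab_negC) (id \<circ> col_negC)"
  using CD_move_trans[OF CD_move_negC CD_move_revC[OF CD_move_NS[OF CD_move_negC]]] by blast
lemma CD_move_negrevD: "(A,A,C,D) \<in> NS n \<Longrightarrow> \<exists>C' D'. CD_move n A C D C' D' (lab_revD \<circ> lab_negD) (id \<circ> col_negD)"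
  using CD_move_trans[OF CD_move_negD CD_move_revD[OF CD_move_NS[OF CD_move_negD]]] by blast

lemma CD_move_establish: "CD_move n A C D C' D' f fc \<Longrightarrow> (\<And>x. P (f x) = P x) \<Longrightarrow> is_first (n div 2) P (quad C D) i0 \<Longrightarrow>
   f (quad C D i0) = v \<Longrightarrow> first_label (n div 2) P v (quad C' D')"
proof -
  assume a: "CD_move n A C D C' D' f fc" "\<And>x. P (f x) = P x" "is_first (n div 2) P (quad C D) i0"
     "f (quad C D i0) = v"
  show ?thesis
  proof (rule first_label_established[of P f])
    show "\<forall>i\<in>{1..n div 2}. quad C' D' i = f (quad C D i)" using a(1) by (simp add: CD_move_def)
    fix i assume "is_first (n div 2) P (quad C D) i"
    then have "i = i0" using a(3) is_first_unique by blast
    then show "f (quad C D i) = v" using a(4) by simp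
  qed (rule a(2))
qed

lemma CD_move_preserve: "CD_move n A C D C' D' f fc \<Longrightarrow> (\<And>x. P (f x) = P x) \<Longrightarrow> f v = v \<Longrightarrow>
   first_label (n div 2) P v (quad C D) \<Longrightarrow> first_label (n div 2) P v (quad C' D')"
  by (rule first_label_preserved[of P f]) (auto simp: CD_move_def)

lemma CD_move_none: "CD_move n A C D C' D' f fc \<Longrightarrow> (\<And>x. P (f x) = P x) \<Longrightarrow>
   (\<forall>i\<in>{1..n div 2}. \<not> P (quad C' D' i)) = (\<forall>i\<in>{1..n div 2}. \<not> P (quad C D i))"
  by (auto simp: CD_move_def)


text \<open>The composite
  "negate and reverse C" acts on symmetric quads only (1 <-> 7, 2 <-> 8), and
  "negate and reverse D" likewise (1 <-> 2, 7 <-> 8); reversals of C and of D act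
  on skew quads only.\<close>

lemmas label_maps = lab_negC_def lab_negD_def lab_revC_def lab_revD_def lab_swapCD_def lab_swap45_def lab_negA_def lab_revA_def lab_alt1_def
  col_negC_def col_negD_def col_swapCD_def col_negA_def symq_def skewq_def

lemma sym_negrevC: "symq ((lab_revC \<circ> lab_negC) x) = symq x" by (simp add: label_maps)
lemma sym_negrevD: "symq ((lab_revD \<circ> lab_negD) x) = symq x" by (simp add: label_maps)
lemma sym_negrevCD: "symq ((lab_revD \<circ> lab_negD) ((lab_revC \<circ> lab_negC) x)) = symq x" by (simp add: label_maps)
lemma sym_revC: "symq (lab_revC x) = symq x" by (simp add: label_maps)
lemma sym_revD: "symq (lab_revD x) = symq x" by (simp add: label_maps)
lemma sym_revCD: "symq (lab_revD (lab_revC x)) = symq x" by (simp add: label_maps)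
lemma skew_revC: "skewq (lab_revC x) = skewq x" by (simp add: label_maps)
lemma skew_revD: "skewq (lab_revD x) = skewq x" by (simp add: label_maps)
lemma skew_revCD: "skewq (lab_revD (lab_revC x)) = skewq x" by (simp add: label_maps)
lemma sym_swapCD: "symq (lab_swapCD x) = symq x" by (simp add: label_maps)
lemma skew_swapCD: "skewq (lab_swapCD x) = skewq x" by (simp add: label_maps)
lemma p27_swapCD: "(lab_swapCD x \<in> {2,7}) = (x \<in> {2,7})" by (simp add: label_maps)
lemma sym_swap45: "symq (lab_swap45 x) = symq x" by (simp add: label_maps)
lemma skew_swap45: "skewq (lab_swap45 x) = skewq x" by (simp add: label_maps)
lemma p27_swap45: "(lab_swap45 x \<in> {2,7}) = (x \<in> {2,7})" by (simp add: label_maps)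
lemma p45_swap45: "(lab_swap45 x \<in> {4,5}) = (x \<in> {4,5})" by (simp add: label_maps)
lemma negrevC_nonsym: "\<not> symq x \<Longrightarrow> (lab_revC \<circ> lab_negC) x = x" by (simp add: label_maps)
lemma negrevD_nonsym: "\<not> symq x \<Longrightarrow> (lab_revD \<circ> lab_negD) x = x" by (simp add: label_maps)


lemma CD_move_E: "CD_move n A C D C' D' f fc \<Longrightarrow> (A,A,C',D') \<in> NS n \<and> NS_equiv n (A,A,C,D) (A,A,C',D')"
  by (simp add: CD_move_def)

lemma CD_move_negrevCD: "(A,A,C,D) \<in> NS n \<Longrightarrow> \<exists>C' D'. CD_move n A C D C' D' ((lab_revD \<circ> lab_negD) \<circ> (lab_revC \<circ> lab_negC)) ((id \<circ> col_negD) \<circ> (id \<circ> col_negC))"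
proof -
  assume S: "(A,A,C,D) \<in> NS n"
  obtain C1 D1 where 1: "CD_move n A C D C1 D1 (lab_revC \<circ> lab_negC) (id \<circ> col_negC)" using CD_move_negrevC[OF S] by blast
  obtain C2 D2 where 2: "CD_move n A C1 D1 C2 D2 (lab_revD \<circ> lab_negD) (id \<circ> col_negD)" using CD_move_negrevD[OF CD_move_NS[OF 1]] by blast
  show ?thesis using CD_move_trans[OF 1 2] by blast
qed

lemma CD_move_revCD: "(A,A,C,D) \<in> NS n \<Longrightarrow> \<exists>C' D'. CD_move n A C D C' D' (lab_revD \<circ> lab_revC) (id \<circ> id)"
  using CD_move_trans[OF CD_move_revC CD_move_revD[OF CD_move_NS[OF CD_move_revC]]] by blast

text \<open>First stage: the first symmetric quad is mapped to 1 by negating and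
  reversing D (2), C (7) or both (8).\<close>
lemma CD_first_sym:
  assumes S: "(A,A,C,D) \<in> NS n"
  shows "\<exists>C' D'. (A,A,C',D') \<in> NS n \<and> NS_equiv n (A,A,C,D) (A,A,C',D') \<and>
     first_label (n div 2) symq 1 (quad C' D')"
proof (cases "\<forall>i\<in>{1..n div 2}. \<not> symq (quad C D i)")
  case True
  then show ?thesis using S first_label_vacuous[of "n div 2" symq "quad C D" 1, OF True] equiv_refl by blast
next
  case False
  then obtain i0 where i0: "is_first (n div 2) symq (quad C D) i0" using is_first_cases by blast
  then have "quad C D i0 \<in> {1,2,7,8}" by (simp add: is_first_def symq_def)
  then consider "quad C D i0 = 1" | "quad C D i0 = 2" | "quad C D i0 = 7" | "quad C D i0 = 8" by blast
  then show ?thesis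
  proof cases
    case 1
    have "first_label (n div 2) symq 1 (quad C D)" using CD_move_establish[OF CD_move_refl[OF S], of symq i0 1] i0 1 by simp
    then show ?thesis using S equiv_refl by blast
  next
    case 2
    obtain C' D' where R: "CD_move n A C D C' D' (lab_revD \<circ> lab_negD) (id \<circ> col_negD)" using CD_move_negrevD[OF S] by blast
    have "first_label (n div 2) symq 1 (quad C' D')" using CD_move_establish[OF R, of symq i0 1] i0 2 sym_negrevD by (simp add: label_maps)
    then show ?thesis using CD_move_E[OF R] by blast
  next
    case 3
    obtain C' D' where R: "CD_move n A C D C' D' (lab_revC \<circ> lab_negC) (id \<circ> col_negC)" using CD_move_negrevC[OF S] by blast
    have "first_label (n div 2) symq 1 (quad C' D')" using CD_move_establish[OF R, of symq i0 1] i0 3 sym_negrevC by (simp add: label_maps)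
    then show ?thesis using CD_move_E[OF R] by blast
  next
    case 4
    obtain C' D' where R: "CD_move n A C D C' D' ((lab_revD \<circ> lab_negD) \<circ> (lab_revC \<circ> lab_negC)) ((id \<circ> col_negD) \<circ> (id \<circ> col_negC))"
      using CD_move_negrevCD[OF S] by blast
    have "first_label (n div 2) symq 1 (quad C' D')" using CD_move_establish[OF R, of symq i0 1] i0 4 sym_negrevCD by (simp add: label_maps)
    then show ?thesis using CD_move_E[OF R] by blast
  qed
qed

text \<open>Second stage: reversals of C and of D act on skew quads only; they map
  the first skew quad to 6 and keep the first symmetric quad.\<close>
lemma CD_first_skew:
  assumes S: "(A,A,C,D) \<in> NS n" and f1: "first_label (n div 2) symq 1 (quad C D)"
  shows "\<exists>C' D'. (A,A,C',D') \<in> NS n \<and> NS_equiv n (A,A,C,D) (A,A,C',D') \<and>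
     first_label (n div 2) symq 1 (quad C' D') \<and> first_label (n div 2) skewq 6 (quad C' D')"
proof (cases "\<forall>i\<in>{1..n div 2}. \<not> skewq (quad C D i)")
  case True
  then show ?thesis using S f1 first_label_vacuous[of "n div 2" skewq "quad C D" 6, OF True] equiv_refl by blast
next
  case False
  then obtain i0 where i0: "is_first (n div 2) skewq (quad C D) i0" using is_first_cases by blast
  then have "quad C D i0 \<in> {3,4,5,6}" by (simp add: is_first_def skewq_def)
  then consider "quad C D i0 = 3" | "quad C D i0 = 4" | "quad C D i0 = 5" | "quad C D i0 = 6" by blast
  then show ?thesis
  proof cases
    case 4
    have "first_label (n div 2) skewq 6 (quad C D)" using CD_move_establish[OF CD_move_refl[OF S], of skewq i0 6] i0 4 by simp
    then show ?thesis using S f1 equiv_refl by blast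
  next
    case 3
    have R: "CD_move n A C D (revseq C) D lab_revC id" using CD_move_revC[OF S] .
    have "first_label (n div 2) skewq 6 (quad (revseq C) D)" using CD_move_establish[OF R, of skewq i0 6] i0 3 skew_revC by (simp add: label_maps)
    moreover have "first_label (n div 2) symq 1 (quad (revseq C) D)" using CD_move_preserve[OF R, of symq 1] f1 sym_revC by (simp add: label_maps)
    ultimately show ?thesis using CD_move_E[OF R] by blast
  next
    case 2
    have R: "CD_move n A C D C (revseq D) lab_revD id" using CD_move_revD[OF S] .
    have "first_label (n div 2) skewq 6 (quad C (revseq D))" using CD_move_establish[OF R, of skewq i0 6] i0 2 skew_revD by (simp add: label_maps)
    moreover have "first_label (n div 2) symq 1 (quad C (revseq D))" using CD_move_preserve[OF R, of symq 1] f1 sym_revD by (simp add: label_maps)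
    ultimately show ?thesis using CD_move_E[OF R] by blast
  next
    case 1
    obtain C' D' where R: "CD_move n A C D C' D' (lab_revD \<circ> lab_revC) (id \<circ> id)" using CD_move_revCD[OF S] by blast
    have "first_label (n div 2) skewq 6 (quad C' D')" using CD_move_establish[OF R, of skewq i0 6] i0 1 skew_revCD by (simp add: label_maps)
    moreover have "first_label (n div 2) symq 1 (quad C' D')" using CD_move_preserve[OF R, of symq 1] f1 sym_revCD by (simp add: label_maps)
    ultimately show ?thesis using CD_move_E[OF R] by blast
  qed
qed

lemma clabel_range: "a \<in> {1,-1} \<Longrightarrow> c \<in> {1,-1} \<Longrightarrow> clabel a c \<in> {0,1,2,3}"
  by (elim pm1_cases; simp add: label_defs)

lemma central_CD_range: "(A,A,C,D) \<in> NS n \<Longrightarrow> odd n \<Longrightarrow> central C D \<in> {0,1,2,3}"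
proof -
  assume S: "(A,A,C,D) \<in> NS n" and o: "odd n"
  from S have b: "binary_seq C" "binary_seq D" "length C = n" "length D = n" by (auto simp: NS_iff)
  then have "C ! (n div 2) \<in> {1,-1}" "D ! (n div 2) \<in> {1,-1}" using bin_mem odd_mid[of C] o by auto
  then show ?thesis using clabel_range b by (simp add: central_def Let_def)
qed

lemma CD_move_same: "CD_move n A C D C' D' f fc \<Longrightarrow> (\<forall>i\<in>{1..n div 2}. f (quad C D i) = quad C D i) \<Longrightarrow>
   \<forall>i\<in>{1..n div 2}. quad C' D' i = id (quad C D i)"
  by (simp add: CD_move_def)

text \<open>Third stage: if n is odd and there are no symmetric quads, the composites
  used in the first stage act only on the central column, which they map to 0.\<close>
lemma CD_central:
  assumes S: "(A,A,C,D) \<in> NS n" and f1: "first_label (n div 2) symq 1 (quad C D)" and f2: "first_label (n div 2) skewq 6 (quad C D)"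
  shows "\<exists>C' D'. (A,A,C',D') \<in> NS n \<and> NS_equiv n (A,A,C,D) (A,A,C',D') \<and>
     first_label (n div 2) symq 1 (quad C' D') \<and> first_label (n div 2) skewq 6 (quad C' D') \<and>
     (odd n \<and> (\<forall>i\<in>{1..n div 2}. \<not> symq (quad C' D' i)) \<longrightarrow> central C' D' = 0)"
proof (cases "odd n \<and> (\<forall>i\<in>{1..n div 2}. \<not> symq (quad C D i)) \<and> central C D \<noteq> 0")
  case False
  show ?thesis by (rule exI[of _ C], rule exI[of _ D]) (use S f1 f2 equiv_refl False in auto)
next
  case True
  then have o: "odd n" and ns: "\<forall>i\<in>{1..n div 2}. \<not> symq (quad C D i)" and c0: "central C D \<noteq> 0" by auto
  have "central C D \<in> {1,2,3}" using central_CD_range[OF S o] c0 by auto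
  then consider "central C D = 1" | "central C D = 2" | "central C D = 3" by blast
  then show ?thesis
  proof cases
    case 2
    obtain C' D' where R: "CD_move n A C D C' D' (lab_revC \<circ> lab_negC) (id \<circ> col_negC)" using CD_move_negrevC[OF S] by blast
    have same: "\<forall>i\<in>{1..n div 2}. quad C' D' i = id (quad C D i)" using CD_move_same[OF R] ns negrevC_nonsym by blast
    have "first_label (n div 2) symq 1 (quad C' D')" by (rule first_label_preserved[OF _ _ same f1]) auto
    moreover have "first_label (n div 2) skewq 6 (quad C' D')" by (rule first_label_preserved[OF _ _ same f2]) auto
    moreover have "central C' D' = 0" using R o 2 by (simp add: CD_move_def label_maps)
    ultimately show ?thesis using CD_move_E[OF R] by blast
  next
    case 1
    obtain C' D' where R: "CD_move n A C D C' D' (lab_revD \<circ> lab_negD) (id \<circ> col_negD)" using CD_move_negrevD[OF S] by blast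
    have same: "\<forall>i\<in>{1..n div 2}. quad C' D' i = id (quad C D i)" using CD_move_same[OF R] ns negrevD_nonsym by blast
    have "first_label (n div 2) symq 1 (quad C' D')" by (rule first_label_preserved[OF _ _ same f1]) auto
    moreover have "first_label (n div 2) skewq 6 (quad C' D')" by (rule first_label_preserved[OF _ _ same f2]) auto
    moreover have "central C' D' = 0" using R o 1 by (simp add: CD_move_def label_maps)
    ultimately show ?thesis using CD_move_E[OF R] by blast
  next
    case 3
    obtain C' D' where R: "CD_move n A C D C' D' ((lab_revD \<circ> lab_negD) \<circ> (lab_revC \<circ> lab_negC)) ((id \<circ> col_negD) \<circ> (id \<circ> col_negC))"
      using CD_move_negrevCD[OF S] by blast
    have same: "\<forall>i\<in>{1..n div 2}. quad C' D' i = id (quad C D i)" using CD_move_same[OF R] ns negrevC_nonsym negrevD_nonsym by simp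
    have "first_label (n div 2) symq 1 (quad C' D')" by (rule first_label_preserved[OF _ _ same f1]) auto
    moreover have "first_label (n div 2) skewq 6 (quad C' D')" by (rule first_label_preserved[OF _ _ same f2]) auto
    moreover have "central C' D' = 0" using R o 3 by (simp add: CD_move_def label_maps)
    ultimately show ?thesis using CD_move_E[OF R] by blast
  qed
qed

definition CD_part3 :: "nat \<Rightarrow> (nat \<Rightarrow> nat) \<Rightarrow> nat \<Rightarrow> bool" where
  "CD_part3 n q qc \<longleftrightarrow> first_label (n div 2) symq 1 q \<and> first_label (n div 2) skewq 6 q \<and>
     (odd n \<and> (\<forall>i\<in>{1..n div 2}. \<not> symq (q i)) \<longrightarrow> qc = 0)"

definition CD_part4 :: "nat \<Rightarrow> (nat \<Rightarrow> nat) \<Rightarrow> nat \<Rightarrow> bool" where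
  "CD_part4 n q qc \<longleftrightarrow> CD_part3 n q qc \<and> first_label (n div 2) (\<lambda>l. l \<in> {2,7}) 2 q \<and>
     (odd n \<and> (\<forall>i\<in>{1..n div 2}. q i \<notin> {2,7}) \<longrightarrow> qc \<noteq> 2)"

text \<open>Swapping C and D keeps the conditions of the first three stages: it fixes
  the labels 1, 6, the symmetry types and the central label 0.\<close>
lemma CD_part3_swapCD:
  assumes S: "(A,A,C,D) \<in> NS n" and p3: "CD_part3 n (quad C D) (central C D)"
  shows "CD_part3 n (quad D C) (central D C)"
proof -
  have f1: "first_label (n div 2) symq 1 (quad C D)" and f2: "first_label (n div 2) skewq 6 (quad C D)"
    and c3: "odd n \<and> (\<forall>i\<in>{1..n div 2}. \<not> symq (quad C D i)) \<longrightarrow> central C D = 0"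
    using p3 by (auto simp: CD_part3_def)
  have R: "CD_move n A C D D C lab_swapCD col_swapCD" using CD_move_swapCD[OF S] .
  have g1: "first_label (n div 2) symq 1 (quad D C)"
    using CD_move_preserve[OF R, of symq 1] f1 sym_swapCD by (simp add: label_maps)
  have g2: "first_label (n div 2) skewq 6 (quad D C)"
    using CD_move_preserve[OF R, of skewq 6] f2 skew_swapCD by (simp add: label_maps)
  have nsym: "(\<forall>i\<in>{1..n div 2}. \<not> symq (quad D C i)) = (\<forall>i\<in>{1..n div 2}. \<not> symq (quad C D i))"
    using CD_move_none[OF R, of symq] sym_swapCD by blast
  have cen: "odd n \<Longrightarrow> central D C = col_swapCD (central C D)" using R by (simp add: CD_move_def)
  show ?thesis unfolding CD_part3_def using g1 g2 nsym cen c3 by (auto simp: label_maps)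
qed

text \<open>Fourth stage: if the first quad in {2,7} is 7, or there is none and the
  central label is 2, swap C and D.\<close>
lemma CD_first_27:
  assumes S: "(A,A,C,D) \<in> NS n" and p3: "CD_part3 n (quad C D) (central C D)"
  shows "\<exists>C' D'. (A,A,C',D') \<in> NS n \<and> NS_equiv n (A,A,C,D) (A,A,C',D') \<and> CD_part4 n (quad C' D') (central C' D')"
proof -
  have R: "CD_move n A C D D C lab_swapCD col_swapCD" using CD_move_swapCD[OF S] .
  have q3: "CD_part3 n (quad D C) (central D C)" using CD_part3_swapCD[OF S p3] .
  have n27: "(\<forall>i\<in>{1..n div 2}. \<not> (quad D C i \<in> {2,7})) = (\<forall>i\<in>{1..n div 2}. \<not> (quad C D i \<in> {2,7}))"
    using CD_move_none[OF R, of "\<lambda>l. l \<in> {2,7}"] p27_swapCD by blast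
  have cen: "odd n \<Longrightarrow> central D C = col_swapCD (central C D)" using R by (simp add: CD_move_def)
  show ?thesis
  proof (cases "\<forall>i\<in>{1..n div 2}. \<not> (quad C D i \<in> {2,7})")
    case True
    show ?thesis
    proof (cases "odd n \<and> central C D = 2")
      case False
      have "CD_part4 n (quad C D) (central C D)" unfolding CD_part4_def
        using p3 first_label_vacuous[of "n div 2" "\<lambda>l. l \<in> {2,7}" "quad C D" 2, OF True] False by auto
      then show ?thesis using S equiv_refl by blast
    next
      case c2: True
      have "CD_part4 n (quad D C) (central D C)" unfolding CD_part4_def
        using q3 c2 cen n27 True first_label_vacuous[of "n div 2" "\<lambda>l. l \<in> {2,7}" "quad D C" 2]
        by (auto simp: label_maps)
      then show ?thesis using CD_move_E[OF R] by blast
    qed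
  next
    case False
    then obtain i0 where i0: "is_first (n div 2) (\<lambda>l. l \<in> {2,7}) (quad C D) i0"
      using is_first_cases[of "n div 2" "\<lambda>l. l \<in> {2,7}" "quad C D"] by auto
    have i0m: "i0 \<in> {1..n div 2}" and v: "quad C D i0 \<in> {2,7}" using i0 unfolding is_first_def by blast+
    have ex27: "\<not> (\<forall>i\<in>{1..n div 2}. quad C D i \<notin> {2,7})" using i0m v by blast
    from v consider "quad C D i0 = 2" | "quad C D i0 = 7" by blast
    then show ?thesis
    proof cases
      case 1
      have "first_label (n div 2) (\<lambda>l. l \<in> {2,7}) 2 (quad C D)"
        using CD_move_establish[OF CD_move_refl[OF S], of "\<lambda>l. l \<in> {2,7}" i0 2] i0 1 by simp
      then have "CD_part4 n (quad C D) (central C D)" unfolding CD_part4_def using p3 ex27 by blast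
      then show ?thesis using S equiv_refl by blast
    next
      case 2
      have "first_label (n div 2) (\<lambda>l. l \<in> {2,7}) 2 (quad D C)"
        using CD_move_establish[OF R, of "\<lambda>l. l \<in> {2,7}" i0 2] i0 2 p27_swapCD by (simp add: label_maps)
      moreover have "\<not> (\<forall>i\<in>{1..n div 2}. quad D C i \<notin> {2,7})" using n27 ex27 by blast
      ultimately have "CD_part4 n (quad D C) (central D C)" unfolding CD_part4_def using q3 by blast
      then show ?thesis using CD_move_E[OF R] by blast
    qed
  qed
qed

text \<open>(E4) only exchanges the labels 4 and 5 and fixes the central column, so it
  keeps the conditions achieved in the first four stages.\<close>
lemma CD_part4_swap45:
  assumes S: "(A,A,C,D) \<in> NS n" and p4: "CD_part4 n (quad C D) (central C D)"
  shows "CD_part4 n (quad (fst (swap45 C D)) (snd (swap45 C D))) (central (fst (swap45 C D)) (snd (swap45 C D)))"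
proof -
  define C' where "C' = fst (swap45 C D)"
  define D' where "D' = snd (swap45 C D)"
  have R: "CD_move n A C D C' D' lab_swap45 id" using CD_move_swap45[OF S] unfolding C'_def D'_def .
  have f1: "first_label (n div 2) symq 1 (quad C D)" and f2: "first_label (n div 2) skewq 6 (quad C D)"
    and c3: "odd n \<and> (\<forall>i\<in>{1..n div 2}. \<not> symq (quad C D i)) \<longrightarrow> central C D = 0"
    and f27: "first_label (n div 2) (\<lambda>l. l \<in> {2,7}) 2 (quad C D)"
    and c4: "odd n \<and> (\<forall>i\<in>{1..n div 2}. quad C D i \<notin> {2,7}) \<longrightarrow> central C D \<noteq> 2"
    using p4 by (auto simp: CD_part3_def CD_part4_def)
  have g1: "first_label (n div 2) symq 1 (quad C' D')"
    using CD_move_preserve[OF R, of symq 1] f1 sym_swap45 by (simp add: label_maps)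
  have g2: "first_label (n div 2) skewq 6 (quad C' D')"
    using CD_move_preserve[OF R, of skewq 6] f2 skew_swap45 by (simp add: label_maps)
  have g27: "first_label (n div 2) (\<lambda>l. l \<in> {2,7}) 2 (quad C' D')"
    using CD_move_preserve[OF R, of "\<lambda>l. l \<in> {2,7}" 2] f27 p27_swap45 by (simp add: label_maps)
  have nsym: "(\<forall>i\<in>{1..n div 2}. \<not> symq (quad C' D' i)) = (\<forall>i\<in>{1..n div 2}. \<not> symq (quad C D i))"
    using CD_move_none[OF R, of symq] sym_swap45 by blast
  have n27: "(\<forall>i\<in>{1..n div 2}. \<not> (quad C' D' i \<in> {2,7})) = (\<forall>i\<in>{1..n div 2}. \<not> (quad C D i \<in> {2,7}))"
    using CD_move_none[OF R, of "\<lambda>l. l \<in> {2,7}"] p27_swap45 by blast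
  have cen: "odd n \<Longrightarrow> central C' D' = central C D" using R by (simp add: CD_move_def)
  have "CD_part4 n (quad C' D') (central C' D')" unfolding CD_part4_def CD_part3_def
    using g1 g2 g27 nsym n27 cen c3 c4 by auto
  then show ?thesis unfolding C'_def D'_def .
qed

definition CD_part5 :: "nat \<Rightarrow> (nat \<Rightarrow> nat) \<Rightarrow> nat \<Rightarrow> bool" where
  "CD_part5 n q qc \<longleftrightarrow> CD_part4 n q qc \<and> first_label (n div 2) (\<lambda>l. l \<in> {4,5}) 4 q"

lemma CD_first_45:
  assumes S: "(A,A,C,D) \<in> NS n" and p4: "CD_part4 n (quad C D) (central C D)"
  shows "\<exists>C' D'. (A,A,C',D') \<in> NS n \<and> NS_equiv n (A,A,C,D) (A,A,C',D') \<and> CD_part5 n (quad C' D') (central C' D')"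
proof (cases "\<forall>i\<in>{1..n div 2}. \<not> (quad C D i \<in> {4,5})")
  case True
  have "CD_part5 n (quad C D) (central C D)" unfolding CD_part5_def
    using p4 first_label_vacuous[of "n div 2" "\<lambda>l. l \<in> {4,5}" "quad C D" 4, OF True] by auto
  then show ?thesis using S equiv_refl by blast
next
  case False
  then obtain i0 where i0: "is_first (n div 2) (\<lambda>l. l \<in> {4,5}) (quad C D) i0"
    using is_first_cases[of "n div 2" "\<lambda>l. l \<in> {4,5}" "quad C D"] by auto
  then have "quad C D i0 \<in> {4,5}" by (auto simp: is_first_def)
  then consider "quad C D i0 = 4" | "quad C D i0 = 5" by blast
  then show ?thesis
  proof cases
    case 1
    have "first_label (n div 2) (\<lambda>l. l \<in> {4,5}) 4 (quad C D)"
      using CD_move_establish[OF CD_move_refl[OF S], of "\<lambda>l. l \<in> {4,5}" i0 4] i0 1 by simp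
    then have "CD_part5 n (quad C D) (central C D)" unfolding CD_part5_def using p4 by auto
    then show ?thesis using S equiv_refl by blast
  next
    case 2
    have R: "CD_move n A C D (fst (swap45 C D)) (snd (swap45 C D)) lab_swap45 id" using CD_move_swap45[OF S] .
    have "first_label (n div 2) (\<lambda>l. l \<in> {4,5}) 4 (quad (fst (swap45 C D)) (snd (swap45 C D)))"
      using CD_move_establish[OF R, of "\<lambda>l. l \<in> {4,5}" i0 4] i0 2 p45_swap45 by (simp add: label_maps)
    then have "CD_part5 n (quad (fst (swap45 C D)) (snd (swap45 C D))) (central (fst (swap45 C D)) (snd (swap45 C D)))"
      unfolding CD_part5_def using CD_part4_swap45[OF S p4] by blast
    then show ?thesis using CD_move_E[OF R] by blast
  qed
qed

lemma qlabel_sym_or_skew: "a \<in> {1,-1} \<Longrightarrow> b \<in> {1,-1} \<Longrightarrow> c \<in> {1,-1} \<Longrightarrow> d \<in> {1,-1} \<Longrightarrow> a * b = c * d \<Longrightarrow>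
   symq (qlabel a b c d) \<or> skewq (qlabel a b c d)"
  by (elim pm1_cases; simp add: label_defs symq_def skewq_def)

text \<open>By the structural property every quad of (C;D) carries a label, i.e. is
  symmetric or skew.\<close>
lemma CD_quad_labelled:
  assumes S: "(A,A,C,D) \<in> NS n" and i: "1 \<le> i" "i \<le> n div 2"
  shows "symq (quad C D i) \<or> skewq (quad C D i)"
proof -
  from S have b: "binary_seq C" "binary_seq D" "length C = n" "length D = n" by (auto simp: NS_iff)
  have st: "entry C (int i) * entry C (int n + 1 - int i) = entry D (int i) * entry D (int n + 1 - int i)"
    using NS_CD_mirror_products[OF S, of "int i"] i by auto
  have "i \<le> n" using i by auto
  then have e: "C ! (i - 1) = entry C (int i)" "D ! (i - 1) = entry D (int i)"
    "C ! (n - i) = entry C (int n + 1 - int i)" "D ! (n - i) = entry D (int n + 1 - int i)"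
    using entry_nth[of i C] entry_nth[of i D] entry_nth2[of i C] entry_nth2[of i D] i b by auto
  have m: "C ! (i - 1) \<in> {1,-1}" "C ! (n - i) \<in> {1,-1}" "D ! (i - 1) \<in> {1,-1}" "D ! (n - i) \<in> {1,-1}"
    using bin_mem[OF b(1)] bin_mem[OF b(2)] quad_index_bounds[OF i] b by auto
  show ?thesis using qlabel_sym_or_skew[OF m] st e b by (simp add: quad_def Let_def)
qed

definition CD_canonical :: "nat \<Rightarrow> (nat \<Rightarrow> nat) \<Rightarrow> nat \<Rightarrow> bool" where
  "CD_canonical n q qc \<longleftrightarrow> (n > 1 \<longrightarrow> q 1 \<in> {1,6}) \<and> first_label (n div 2) symq 1 q \<and> first_label (n div 2) skewq 6 q \<and>
     first_label (n div 2) (\<lambda>l. l \<in> {2,7}) 2 q \<and> first_label (n div 2) (\<lambda>l. l \<in> {4,5}) 4 q \<and>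
     (odd n \<and> (\<forall>i\<in>{1..n div 2}. q i \<noteq> 2) \<longrightarrow> qc \<noteq> 2) \<and>
     (odd n \<and> (\<forall>i\<in>{1..n div 2}. q i \<noteq> 1) \<longrightarrow> qc = 0)"

text \<open>Running the five stages; (vi) holds because quad 1 is the first quad of
  its type, and (xi), (xii) follow from the stage conditions by contraposition.\<close>
lemma CD_canonical_exists:
  assumes S: "(A,A,C,D) \<in> NS n"
  shows "\<exists>C' D'. (A,A,C',D') \<in> NS n \<and> NS_equiv n (A,A,C,D) (A,A,C',D') \<and> CD_canonical n (quad C' D') (central C' D')"
proof -
  obtain C1 D1 where 1: "(A,A,C1,D1) \<in> NS n" "NS_equiv n (A,A,C,D) (A,A,C1,D1)" "first_label (n div 2) symq 1 (quad C1 D1)"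
    using CD_first_sym[OF S] by blast
  obtain C2 D2 where 2: "(A,A,C2,D2) \<in> NS n" "NS_equiv n (A,A,C1,D1) (A,A,C2,D2)"
    "first_label (n div 2) symq 1 (quad C2 D2)" "first_label (n div 2) skewq 6 (quad C2 D2)"
    using CD_first_skew[OF 1(1,3)] by blast
  obtain C3 D3 where 3: "(A,A,C3,D3) \<in> NS n" "NS_equiv n (A,A,C2,D2) (A,A,C3,D3)" "CD_part3 n (quad C3 D3) (central C3 D3)"
    using CD_central[OF 2(1,3,4)] unfolding CD_part3_def by blast
  obtain C4 D4 where 4: "(A,A,C4,D4) \<in> NS n" "NS_equiv n (A,A,C3,D3) (A,A,C4,D4)" "CD_part4 n (quad C4 D4) (central C4 D4)"
    using CD_first_27[OF 3(1,3)] by blast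
  obtain C5 D5 where 5: "(A,A,C5,D5) \<in> NS n" "NS_equiv n (A,A,C4,D4) (A,A,C5,D5)" "CD_part5 n (quad C5 D5) (central C5 D5)"
    using CD_first_45[OF 4(1,3)] by blast
  have eq: "NS_equiv n (A,A,C,D) (A,A,C5,D5)" using 1(2) 2(2) 3(2) 4(2) 5(2) equiv_trans by meson
  let ?m = "n div 2" and ?q = "quad C5 D5" and ?qc = "central C5 D5"
  have f1: "first_label ?m symq 1 ?q" and f2: "first_label ?m skewq 6 ?q"
    and c3: "odd n \<and> (\<forall>i\<in>{1..?m}. \<not> symq (?q i)) \<longrightarrow> ?qc = 0"
    and f27: "first_label ?m (\<lambda>l. l \<in> {2,7}) 2 ?q"
    and c4: "odd n \<and> (\<forall>i\<in>{1..?m}. ?q i \<notin> {2,7}) \<longrightarrow> ?qc \<noteq> 2"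
    and f45: "first_label ?m (\<lambda>l. l \<in> {4,5}) 4 ?q"
    using 5(3) unfolding CD_part5_def CD_part4_def CD_part3_def by blast+
  have "n > 1 \<longrightarrow> ?q 1 \<in> {1,6}"
  proof
    assume "n > 1"
    then have m: "1 \<le> ?m" by auto
    show "?q 1 \<in> {1,6}"
      using CD_quad_labelled[OF 5(1) order.refl m] first_label_at_1[OF f1 m] first_label_at_1[OF f2 m] by auto
  qed
  moreover have "odd n \<and> (\<forall>i\<in>{1..?m}. ?q i \<noteq> 2) \<longrightarrow> ?qc \<noteq> 2"
    using c4 first_label_witness[OF f27] by auto
  moreover have "odd n \<and> (\<forall>i\<in>{1..?m}. ?q i \<noteq> 1) \<longrightarrow> ?qc = 0"
    using c3 first_label_witness[OF f1] by auto
  ultimately have "CD_canonical n ?q ?qc" unfolding CD_canonical_def using f1 f2 f27 f45 by blast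
  then show ?thesis using 5(1) eq by blast
qed


text \<open>For (A;A) the quads lie in {1,3,6,8}.  "Negate and reverse A" exchanges
  1 <-> 8 and fixes the skew quads, "reverse A" exchanges 3 <-> 6 and fixes the
  symmetric ones.  The group they generate is parametrised by two flags:
  A_act gs gk flips symmetric quads iff gs and skew quads iff gk.  A label is
  good if it is 1 or 6, i.e. the normalised label of its symmetry type.\<close>

definition A_act :: "bool \<Rightarrow> bool \<Rightarrow> nat \<Rightarrow> nat" where
  "A_act gs gk l = (if symq l then (if gs then lab_revA (lab_negA l) else l) else (if gk then lab_revA l else l))"
definition A_act_col :: "bool \<Rightarrow> nat \<Rightarrow> nat" where
  "A_act_col gs c = (if gs then col_negA c else c)"
definition good_label :: "nat \<Rightarrow> bool" where
  "good_label l \<longleftrightarrow> l \<in> {1,6}"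

lemma A_act_sym: "symq (A_act gs gk l) = symq l" by (simp add: A_act_def label_maps)
lemma A_act_skew: "skewq (A_act gs gk l) = skewq l" by (simp add: A_act_def label_maps)
lemma A_act_good: "l \<in> {1,3,6,8} \<Longrightarrow> good_label (A_act gs gk l) = (good_label l \<noteq> (if symq l then gs else gk))"
  by (auto simp: A_act_def label_maps good_label_def)
lemma A_act_comp: "l \<in> {1,3,6,8} \<Longrightarrow> A_act gs gk (A_act gs' gk' l) = A_act (gs \<noteq> gs') (gk \<noteq> gk') l"
  by (auto simp: A_act_def label_maps)
lemma A_act_col_comp: "A_act_col gs (A_act_col gs' c) = A_act_col (gs \<noteq> gs') c"
  by (auto simp: A_act_col_def label_maps)
lemma A_act_id: "A_act False False l = l" by (simp add: A_act_def)
lemma A_act_col_id: "A_act_col False c = c" by (simp add: A_act_col_def)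
lemma A_act_negrev: "l \<in> {1,3,6,8} \<Longrightarrow> lab_revA (lab_negA l) = A_act True False l" by (auto simp: A_act_def label_maps)
lemma A_act_rev: "l \<in> {1,3,6,8} \<Longrightarrow> lab_revA l = A_act False True l" by (auto simp: A_act_def label_maps)
lemma lab_negA_good: "l \<in> {1,3,6,8} \<Longrightarrow> good_label (lab_negA l) = (\<not> good_label l) \<and> symq (lab_negA l) = symq l \<and> lab_negA l \<in> {1,3,6,8}"
  by (auto simp: label_maps good_label_def)

definition A_move :: "nat \<Rightarrow> int list \<Rightarrow> int list \<Rightarrow> int list \<Rightarrow> int list \<Rightarrow> int list \<Rightarrow> int list \<Rightarrow> bool \<Rightarrow> bool \<Rightarrow> bool" where
  "A_move n A C D A' C' D' gs gk \<longleftrightarrow> (A',A',C',D') \<in> NS n \<and> NS_equiv n (A,A,C,D) (A',A',C',D') \<and>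
     (\<forall>i\<in>{1..n div 2}. quad A' A' i = A_act gs gk (quad A A i)) \<and> (odd n \<longrightarrow> central A' A' = A_act_col gs (central A A))"

lemma A_range: "(A,A,C,D) \<in> NS n \<Longrightarrow> i \<in> {1..n div 2} \<Longrightarrow> quad A A i \<in> {1,3,6,8}"
  using quad_A_range[of A i] by (auto simp: NS_iff)

lemma A_crange: "(A,A,C,D) \<in> NS n \<Longrightarrow> odd n \<Longrightarrow> central A A \<in> {0,3}"
  using central_A_range[of A] by (auto simp: NS_iff)

lemma A_move_refl: "(A,A,C,D) \<in> NS n \<Longrightarrow> A_move n A C D A C D False False"
  by (simp add: A_move_def equiv_refl A_act_id A_act_col_id)

lemma A_move_trans: "(A,A,C,D) \<in> NS n \<Longrightarrow> A_move n A C D A1 C1 D1 gs gk \<Longrightarrow> A_move n A1 C1 D1 A2 C2 D2 gs' gk' \<Longrightarrow>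
   A_move n A C D A2 C2 D2 (gs' \<noteq> gs) (gk' \<noteq> gk)"
  unfolding A_move_def using equiv_trans A_act_comp A_range A_act_col_comp by auto

lemma A_move_SF: assumes S: "(A,A,C,D) \<in> NS n" shows "A_move n A C D (revseq (negseq A)) C D True False"
proof -
  have b: "binary_seq A" "length A = n" using S by (auto simp: NS_iff)
  have s1: "(negseq A, negseq A, C, D) \<in> NS n \<and> NS_equiv n (A,A,C,D) (negseq A, negseq A, C, D)" using step_negA[OF S] .
  note s2 = step_revA[OF s1[THEN conjunct1]]
  show ?thesis unfolding A_move_def
  proof (intro conjI)
    show "(revseq (negseq A), revseq (negseq A), C, D) \<in> NS n" using s2 by blast
    show "NS_equiv n (A, A, C, D) (revseq (negseq A), revseq (negseq A), C, D)" using s1 s2 equiv_trans by blast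
    show "\<forall>i\<in>{1..n div 2}. quad (revseq (negseq A)) (revseq (negseq A)) i = A_act True False (quad A A i)"
      using quad_revA[OF bin_neg[OF b(1)]] quad_negA[OF b(1)] A_act_negrev A_range[OF S] b by (simp add: len_ops)
    show "odd n \<longrightarrow> central (revseq (negseq A)) (revseq (negseq A)) = A_act_col True (central A A)"
      using central_revA[OF bin_neg[OF b(1)]] central_negA[OF b(1)] b by (simp add: len_ops A_act_col_def)
  qed
qed

lemma A_move_RA: assumes S: "(A,A,C,D) \<in> NS n" shows "A_move n A C D (revseq A) C D False True"
proof -
  have b: "binary_seq A" "length A = n" using S by (auto simp: NS_iff)
  note s2 = step_revA[OF S]
  show ?thesis unfolding A_move_def
  proof (intro conjI)
    show "(revseq A, revseq A, C, D) \<in> NS n" using s2 by blast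
    show "NS_equiv n (A, A, C, D) (revseq A, revseq A, C, D)" using s2 by blast
    show "\<forall>i\<in>{1..n div 2}. quad (revseq A) (revseq A) i = A_act False True (quad A A i)"
      using quad_revA[OF b(1)] A_act_rev A_range[OF S] b by simp
    show "odd n \<longrightarrow> central (revseq A) (revseq A) = A_act_col False (central A A)"
      using central_revA[OF b(1)] b by (simp add: A_act_col_def)
  qed
qed


lemma A_move_establish: "A_move n A C D A' C' D' gs gk \<Longrightarrow> (\<And>x. P (A_act gs gk x) = P x) \<Longrightarrow> is_first (n div 2) P (quad A A) i0 \<Longrightarrow>
   A_act gs gk (quad A A i0) = v \<Longrightarrow> first_label (n div 2) P v (quad A' A')"
proof -
  assume a: "A_move n A C D A' C' D' gs gk" "\<And>x. P (A_act gs gk x) = P x" "is_first (n div 2) P (quad A A) i0"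
     "A_act gs gk (quad A A i0) = v"
  show ?thesis
  proof (rule first_label_established[of P "A_act gs gk"])
    show "\<forall>i\<in>{1..n div 2}. quad A' A' i = A_act gs gk (quad A A i)" using a(1) by (simp add: A_move_def)
    fix i assume "is_first (n div 2) P (quad A A) i"
    then have "i = i0" using a(3) is_first_unique by blast
    then show "A_act gs gk (quad A A i) = v" using a(4) by simp
  qed (rule a(2))
qed

lemma A_move_preserve: "A_move n A C D A' C' D' gs gk \<Longrightarrow> (\<And>x. P (A_act gs gk x) = P x) \<Longrightarrow> A_act gs gk v = v \<Longrightarrow>
   first_label (n div 2) P v (quad A A) \<Longrightarrow> first_label (n div 2) P v (quad A' A')"
  by (rule first_label_preserved[of P "A_act gs gk"]) (auto simp: A_move_def)

lemma A_move_NS: "A_move n A C D A' C' D' gs gk \<Longrightarrow> (A',A',C',D') \<in> NS n"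
  by (simp add: A_move_def)

lemma A_first_sym:
  assumes S: "(A,A,C,D) \<in> NS n"
  shows "\<exists>A' C' D' gs gk. A_move n A C D A' C' D' gs gk \<and> first_label (n div 2) symq 1 (quad A' A')"
proof (cases "\<forall>i\<in>{1..n div 2}. \<not> symq (quad A A i)")
  case True
  then show ?thesis using A_move_refl[OF S] first_label_vacuous[of "n div 2" symq "quad A A" 1, OF True] by blast
next
  case False
  then obtain i0 where i0: "is_first (n div 2) symq (quad A A) i0" using is_first_cases[of "n div 2" symq "quad A A"] by blast
  then have "quad A A i0 \<in> {1,3,6,8}" "symq (quad A A i0)" using A_range[OF S] by (auto simp: is_first_def)
  then consider "quad A A i0 = 1" | "quad A A i0 = 8" by (auto simp: symq_def)
  then show ?thesis
  proof cases
    case 1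
    have "first_label (n div 2) symq 1 (quad A A)" using A_move_establish[OF A_move_refl[OF S], of symq i0 1] i0 A_act_sym 1 by (simp add: A_act_id)
    then show ?thesis using A_move_refl[OF S] by blast
  next
    case 2
    have "first_label (n div 2) symq 1 (quad (revseq (negseq A)) (revseq (negseq A)))"
      using A_move_establish[OF A_move_SF[OF S], of symq i0 1] i0 A_act_sym 2 by (simp add: A_act_def label_maps)
    then show ?thesis using A_move_SF[OF S] by blast
  qed
qed

text \<open>If the first skew quad is 3, reverse A; this fixes the symmetric quads.\<close>
lemma A_first_skew:
  assumes S: "(A,A,C,D) \<in> NS n" and f1: "first_label (n div 2) symq 1 (quad A A)"
  shows "\<exists>A' C' D' gs gk. A_move n A C D A' C' D' gs gk \<and> first_label (n div 2) symq 1 (quad A' A') \<and>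
     first_label (n div 2) skewq 6 (quad A' A')"
proof (cases "\<forall>i\<in>{1..n div 2}. \<not> skewq (quad A A i)")
  case True
  then show ?thesis using A_move_refl[OF S] f1 first_label_vacuous[of "n div 2" skewq "quad A A" 6, OF True] by blast
next
  case False
  then obtain i0 where i0: "is_first (n div 2) skewq (quad A A) i0" using is_first_cases[of "n div 2" skewq "quad A A"] by blast
  then have "quad A A i0 \<in> {1,3,6,8}" "skewq (quad A A i0)" using A_range[OF S] by (auto simp: is_first_def)
  then consider "quad A A i0 = 6" | "quad A A i0 = 3" by (auto simp: skewq_def)
  then show ?thesis
  proof cases
    case 1
    have "first_label (n div 2) skewq 6 (quad A A)" using A_move_establish[OF A_move_refl[OF S], of skewq i0 6] i0 1 by (simp add: A_act_id)
    then show ?thesis using A_move_refl[OF S] f1 by blast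
  next
    case 2
    have R: "A_move n A C D (revseq A) C D False True" using A_move_RA[OF S] .
    have "first_label (n div 2) skewq 6 (quad (revseq A) (revseq A))"
      using A_move_establish[OF R, of skewq i0 6] i0 2 A_act_skew by (simp add: A_act_def label_maps)
    moreover have "first_label (n div 2) symq 1 (quad (revseq A) (revseq A))"
      using A_move_preserve[OF R, of symq 1] f1 A_act_sym by (simp add: A_act_def label_maps)
    ultimately show ?thesis using R by blast
  qed
qed

text \<open>If n is odd and all quads are skew, negating and reversing A fixes the
  quads and turns the central label 3 into 0.\<close>
lemma A_central:
  assumes S: "(A,A,C,D) \<in> NS n" and f1: "first_label (n div 2) symq 1 (quad A A)" and f2: "first_label (n div 2) skewq 6 (quad A A)"
  shows "\<exists>A' C' D' gs gk. A_move n A C D A' C' D' gs gk \<and> first_label (n div 2) symq 1 (quad A' A') \<and>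
     first_label (n div 2) skewq 6 (quad A' A') \<and>
     (odd n \<and> (\<forall>i\<in>{1..n div 2}. \<not> symq (quad A' A' i)) \<longrightarrow> central A' A' = 0)"
proof (cases "odd n \<and> (\<forall>i\<in>{1..n div 2}. \<not> symq (quad A A i)) \<and> central A A \<noteq> 0")
  case False
  show ?thesis by (rule exI[of _ A], rule exI[of _ C], rule exI[of _ D], rule exI[of _ False], rule exI[of _ False])
    (use A_move_refl[OF S] f1 f2 False in auto)
next
  case True
  then have o: "odd n" and ns: "\<forall>i\<in>{1..n div 2}. \<not> symq (quad A A i)" and c: "central A A \<noteq> 0" by auto
  have c3: "central A A = 3" using A_crange[OF S o] c by auto
  have R: "A_move n A C D (revseq (negseq A)) C D True False" using A_move_SF[OF S] .
  define A' where "A' = revseq (negseq A)"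
  have R': "A_move n A C D A' C D True False" using R unfolding A'_def .
  have ns': "\<forall>i\<in>{1..n div 2}. \<not> symq (quad A' A' i)" using R' ns A_act_sym by (simp add: A_move_def)
  have "first_label (n div 2) symq 1 (quad A' A')" using first_label_vacuous[of "n div 2" symq "quad A' A'" 1, OF ns'] .
  moreover have "first_label (n div 2) skewq 6 (quad A' A')"
    using A_move_preserve[OF R', of skewq 6] f2 A_act_skew by (simp add: A_act_def label_maps)
  moreover have "central A' A' = 0" using R' o c3 by (simp add: A_move_def A_act_col_def label_maps)
  ultimately show ?thesis using R' by blast
qed

lemma A_normalize:
  assumes S: "(A,A,C,D) \<in> NS n"
  shows "\<exists>A' C' D' gs gk. A_move n A C D A' C' D' gs gk \<and> first_label (n div 2) symq 1 (quad A' A') \<and>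
     first_label (n div 2) skewq 6 (quad A' A') \<and>
     (odd n \<and> (\<forall>i\<in>{1..n div 2}. \<not> symq (quad A' A' i)) \<longrightarrow> central A' A' = 0)"
proof -
  obtain A1 C1 D1 gs1 gk1 where 1: "A_move n A C D A1 C1 D1 gs1 gk1" "first_label (n div 2) symq 1 (quad A1 A1)"
    using A_first_sym[OF S] by blast
  obtain A2 C2 D2 gs2 gk2 where 2: "A_move n A1 C1 D1 A2 C2 D2 gs2 gk2" "first_label (n div 2) symq 1 (quad A2 A2)"
    "first_label (n div 2) skewq 6 (quad A2 A2)"
    using A_first_skew[OF A_move_NS[OF 1(1)] 1(2)] by blast
  obtain A3 C3 D3 gs3 gk3 where 3: "A_move n A2 C2 D2 A3 C3 D3 gs3 gk3" "first_label (n div 2) symq 1 (quad A3 A3)"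
    "first_label (n div 2) skewq 6 (quad A3 A3)"
    "odd n \<and> (\<forall>i\<in>{1..n div 2}. \<not> symq (quad A3 A3 i)) \<longrightarrow> central A3 A3 = 0"
    using A_central[OF A_move_NS[OF 2(1)] 2(2,3)] by blast
  have "A_move n A C D A3 C3 D3 (gs3 \<noteq> (gs2 \<noteq> gs1)) (gk3 \<noteq> (gk2 \<noteq> gk1))"
    using A_move_trans[OF S A_move_trans[OF S 1(1) 2(1)] 3(1)] .
  then show ?thesis using 3(2-4) by blast
qed


text \<open>Condition (v) is a parity statement along a prefix of alternating
  quad types.\<close>

lemma alt_effect_odd:
  assumes S: "(A,A,C,D) \<in> NS n" and o: "odd n"
  shows "(altseq A, altseq A, altseq C, altseq D) \<in> NS n \<and> NS_equiv n (A,A,C,D) (altseq A, altseq A, altseq C, altseq D) \<and>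
    (\<forall>i\<in>{1..n div 2}. quad (altseq A) (altseq A) i = (if even i then lab_negA (quad A A i) else quad A A i)) \<and>
    central (altseq A) (altseq A) = (if odd (n div 2) then col_negA (central A A) else central A A)"
proof -
  have b: "binary_seq A" "length A = n" using S by (auto simp: NS_iff)
  have 2: "\<forall>i\<in>{1..n div 2}. quad (altseq A) (altseq A) i = (if even i then lab_negA (quad A A i) else quad A A i)"
  proof
    fix i assume "i \<in> {1..n div 2}"
    then show "quad (altseq A) (altseq A) i = (if even i then lab_negA (quad A A i) else quad A A i)"
      using quad_altA_odd[OF b(1), of i] b o by simp
  qed
  have 3: "central (altseq A) (altseq A) = (if odd (n div 2) then col_negA (central A A) else central A A)"
    using central_altA[OF b(1)] b o by simp
  show ?thesis using step_alt[OF S] 2 3 by blast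
qed

lemma alt_effect_even:
  assumes S: "(A,A,C,D) \<in> NS n" and e: "even n" and n: "n \<ge> 2"
  shows "(altseq A, altseq A, altseq C, altseq D) \<in> NS n \<and> NS_equiv n (A,A,C,D) (altseq A, altseq A, altseq C, altseq D) \<and>
    quad (altseq A) (altseq A) 1 = lab_alt1 (quad A A 1)"
proof -
  have b: "binary_seq A" "length A = n" using S by (auto simp: NS_iff)
  have "1 \<le> (1::nat)" "1 \<le> length A div 2" using n b by auto
  then have "quad (altseq A) (altseq A) 1 = lab_alt1 (quad A A 1)" using quad_altA_even1[OF b(1)] b e by simp
  then show ?thesis using step_alt[OF S] by blast
qed

definition adj_cond :: "nat \<Rightarrow> (nat \<Rightarrow> nat) \<Rightarrow> bool" where
  "adj_cond m p \<longleftrightarrow> (\<forall>i\<in>{1..<m}. same_type (p i) (p (i + 1)) \<and>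
              (\<forall>j\<in>{1..<i}. \<not> same_type (p j) (p (j + 1))) \<longrightarrow> p (i + 1) \<in> {1, 6})"
definition adj_central_cond :: "nat \<Rightarrow> (nat \<Rightarrow> nat) \<Rightarrow> nat \<Rightarrow> bool" where
  "adj_central_cond m p pc \<longleftrightarrow> ((\<forall>i\<in>{1..<m}. \<not> same_type (p i) (p (i + 1))) \<and> m \<ge> 1 \<and> symq (p m) \<longrightarrow> pc = 0)"

definition A_canonical :: "nat \<Rightarrow> (nat \<Rightarrow> nat) \<Rightarrow> nat \<Rightarrow> bool" where
  "A_canonical n p pc \<longleftrightarrow> (even n \<longrightarrow> p 1 = 1) \<and> (odd n \<and> n > 1 \<longrightarrow> p 1 \<in> {1, 6}) \<and>
     first_label (n div 2) symq 1 p \<and> first_label (n div 2) skewq 6 p \<and>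
     (odd n \<and> (\<forall>i\<in>{1..n div 2}. skewq (p i)) \<longrightarrow> pc = 0) \<and>
     (odd n \<longrightarrow> adj_cond (n div 2) p \<and> adj_central_cond (n div 2) p pc)"

lemma st_iff: "x \<in> {1,3,6,8} \<Longrightarrow> y \<in> {1,3,6,8} \<Longrightarrow> same_type x y = (symq x = symq y)"
  by (elim insertE emptyE; simp add: same_type_def symq_def skewq_def)

lemma range_types: "x \<in> {1,3,6,8} \<Longrightarrow> skewq x = (\<not> symq x)"
  by (elim insertE emptyE; simp add: symq_def skewq_def)

definition A_normal :: "nat \<Rightarrow> (nat \<Rightarrow> nat) \<Rightarrow> bool" where
  "A_normal m p \<longleftrightarrow> (\<forall>i\<in>{1..m}. p i \<in> {1,3,6,8}) \<and> first_label m symq 1 p \<and> first_label m skewq 6 p"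

lemma A_canonical_odd_intro:
  assumes o: "odd n" and N: "A_normal (n div 2) p"
    and c: "(\<forall>i\<in>{1..n div 2}. \<not> symq (p i)) \<longrightarrow> pc = 0"
    and v: "adj_cond (n div 2) p" "adj_central_cond (n div 2) p pc"
  shows "A_canonical n p pc"
proof -
  have r: "\<forall>i\<in>{1..n div 2}. p i \<in> {1,3,6,8}"
    and f1: "first_label (n div 2) symq 1 p" and f2: "first_label (n div 2) skewq 6 p"
    using N unfolding A_normal_def by auto
  have "n > 1 \<longrightarrow> p 1 \<in> {1,6}"
  proof
    assume "n > 1"
    then have m: "1 \<le> n div 2" using o by auto
    then have "symq (p 1) \<or> skewq (p 1)" using r range_types by auto
    then show "p 1 \<in> {1,6}" using first_label_at_1[OF f1 m] first_label_at_1[OF f2 m] by auto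
  qed
  moreover have "(\<forall>i\<in>{1..n div 2}. skewq (p i)) \<longrightarrow> pc = 0" using c r range_types by blast
  ultimately show ?thesis unfolding A_canonical_def using o f1 f2 v by auto
qed

text \<open>Even n: if the first quad is skew, alternate to make it symmetric; then
  normalise, which turns it into 1.\<close>

lemma A_move_E: "A_move n A C D A' C' D' gs gk \<Longrightarrow> (A',A',C',D') \<in> NS n \<and> NS_equiv n (A,A,C,D) (A',A',C',D')"
  by (simp add: A_move_def)

lemma A_canonical_exists_even:
  assumes S: "(A,A,C,D) \<in> NS n" and e: "even n" and n1: "n \<ge> 1"
  shows "\<exists>A' C' D'. (A',A',C',D') \<in> NS n \<and> NS_equiv n (A,A,C,D) (A',A',C',D') \<and> A_canonical n (quad A' A') (central A' A')"
proof -
  have n2: "n \<ge> 2" using e n1 by presburger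
  have one: "(1::nat) \<in> {1..n div 2}" using n2 by auto
  obtain A1 C1 D1 where 1: "(A1,A1,C1,D1) \<in> NS n" "NS_equiv n (A,A,C,D) (A1,A1,C1,D1)" "symq (quad A1 A1 1)"
  proof (cases "symq (quad A A 1)")
    case True
    then show ?thesis using that S equiv_refl by blast
  next
    case False
    have "quad A A 1 \<in> {1,3,6,8}" using A_range[OF S one] .
    then have "quad A A 1 \<in> {3,6}" using False by (auto simp: symq_def)
    then have "symq (lab_alt1 (quad A A 1))" by (auto simp: label_maps)
    then show ?thesis using that alt_effect_even[OF S e n2] by auto
  qed
  obtain A2 C2 D2 gs gk where 2: "A_move n A1 C1 D1 A2 C2 D2 gs gk" "first_label (n div 2) symq 1 (quad A2 A2)"
    "first_label (n div 2) skewq 6 (quad A2 A2)"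
    using A_normalize[OF 1(1)] by blast
  have "quad A2 A2 1 = A_act gs gk (quad A1 A1 1)" using 2(1) one by (simp add: A_move_def)
  then have "symq (quad A2 A2 1)" using 1(3) A_act_sym by simp
  then have "quad A2 A2 1 = 1" using 2(2) one unfolding first_label_def by auto
  then have "A_canonical n (quad A2 A2) (central A2 A2)" unfolding A_canonical_def using e 2(2,3) by auto
  then show ?thesis using A_move_E[OF 2(1)] 1(2) equiv_trans by blast
qed


text \<open>After normalisation only (v) may fail.  Let i be the first index
  with p_i, p_(i+1) of the same type (or i = m if there is none).  Along 1..i
  the types alternate, so the quad r \<in> {1,2} with r \<equiv> i (mod 2) is the first
  of its type, hence good.  Whether p_(i+1) and p_r are both good or both bad
  is unchanged by normalisation but reversed by alternation (r and i+1 have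
  different parities).  So if (v) fails, alternating and normalising again
  repairs it; the central-column case is analogous.\<close>

lemma adj_first_uniq:
  fixes m i i' :: nat
  assumes "i \<in> {1..<m}" "P i" "\<forall>j\<in>{1..<i}. \<not> P j" "i' \<in> {1..<m}" "P i'" "\<forall>j\<in>{1..<i'}. \<not> P j"
  shows "i = i'"
proof (rule linorder_cases[of i i'])
  assume "i < i'" then show ?thesis using assms by auto
next
  assume "i' < i" then show ?thesis using assms by auto
qed

lemma alt_pattern:
  fixes tp :: "nat \<Rightarrow> bool" and i d :: nat
  assumes a: "\<forall>j\<in>{1..<i}. tp (j + 1) = (\<not> tp j)"
  shows "d < i \<Longrightarrow> tp (i - d) = (if even d then tp i else \<not> tp i)"
proof (induction d)
  case 0 then show ?case by simp
next
  case (Suc d)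
  then have "i - Suc d \<in> {1..<i}" by auto
  then have "tp (i - Suc d + 1) = (\<not> tp (i - Suc d))" using a by blast
  moreover have "i - Suc d + 1 = i - d" using Suc.prems by auto
  ultimately show ?case using Suc by auto
qed

lemma norm_first:
  assumes f1: "first_label m symq 1 p" and f2: "first_label m skewq 6 p" and r: "\<forall>i\<in>{1..m}. p i \<in> {1,3,6,8}"
    and rr: "rr = 1 \<or> rr = 2" "rr \<le> m" and d: "rr = 2 \<longrightarrow> symq (p 1) \<noteq> symq (p 2)"
  shows "good_label (p rr)"
proof -
  have rm: "rr \<in> {1..m}" using rr by auto
  have one: "(1::nat) \<in> {1..m}" using rr by auto
  show ?thesis
  proof (cases "symq (p rr)")
    case True
    have "\<forall>j\<in>{1..<rr}. \<not> symq (p j)"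
    proof
      fix j assume "j \<in> {1..<rr}"
      then have "j = 1" "rr = 2" using rr by auto
      then show "\<not> symq (p j)" using d True by auto
    qed
    then show ?thesis using f1 rm True unfolding first_label_def good_label_def by auto
  next
    case False
    then have sk: "skewq (p rr)" using r rm range_types by blast
    have "\<forall>j\<in>{1..<rr}. \<not> skewq (p j)"
    proof
      fix j assume "j \<in> {1..<rr}"
      then have "j = 1" "rr = 2" using rr by auto
      then show "\<not> skewq (p j)" using d False r one range_types by auto
    qed
    then show ?thesis using f2 rm sk unfolding first_label_def good_label_def by auto
  qed
qed


lemma alternating_prefix_pivot:
  assumes N: "A_normal m p" and i: "1 \<le> i" "i \<le> m"
    and alt: "\<forall>j\<in>{1..<i}. symq (p (j + 1)) = (\<not> symq (p j))"
  shows "good_label (p (if odd i then 1 else 2)) \<and> symq (p (if odd i then 1 else 2)) = symq (p i)"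
proof -
  define r where "r = (if odd i then 1 else (2::nat))"
  have r: "r \<le> i" "r = 1 \<or> r = 2" "even r = even i" using i unfolding r_def by auto
  have "i - (i - r) = r" "i - r < i" "even (i - r)" using r i by auto
  then have type: "symq (p r) = symq (p i)" using alt_pattern[OF alt, of "i - r"] by auto
  have "r = 2 \<longrightarrow> symq (p 1) \<noteq> symq (p 2)"
  proof
    assume "r = 2"
    then have "(1::nat) \<in> {1..<i}" using r i unfolding r_def by (auto split: if_splits)
    then show "symq (p 1) \<noteq> symq (p 2)" using alt by (auto simp: numeral_2_eq_2)
  qed
  then have "good_label (p r)" using N r i norm_first[of m p r] unfolding A_normal_def by auto
  then show ?thesis using type unfolding r_def by blast
qed

lemma adjacent_types_alternate:
  fixes p :: "nat \<Rightarrow> nat" and m j :: nat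
  assumes "\<forall>i\<in>{1..m}. p i \<in> {1,3,6,8}" "j \<in> {1..<m}" "\<not> same_type (p j) (p (j + 1))"
  shows "symq (p (j + 1)) = (\<not> symq (p j))"
proof -
  have "j \<in> {1..m}" "j + 1 \<in> {1..m}" using assms(2) by auto
  then show ?thesis using st_iff[of "p j" "p (j + 1)"] assms by auto
qed

lemma adjacent_types_transfer:
  assumes "A_normal m p" "A_normal m p'" "\<forall>x\<in>{1..m}. symq (p' x) = symq (p x)" "i \<in> {1..<m}"
  shows "same_type (p' i) (p' (i + 1)) = same_type (p i) (p (i + 1))"
proof -
  have "i \<in> {1..m}" "i + 1 \<in> {1..m}" using assms(4) by auto
  then show ?thesis using assms st_iff unfolding A_normal_def by metis
qed

text \<open>The parity argument for the first clause of (v).  Here p' arises from p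
  by alternation and renormalisation, which is recorded by the relation between
  the goodness of p' x and p x.\<close>
lemma adj_cond_repair:
  assumes N: "A_normal m p" and N': "A_normal m p'"
    and T: "\<forall>x\<in>{1..m}. symq (p' x) = symq (p x)"
    and L: "\<forall>x\<in>{1..m}. good_label (p' x) = ((good_label (p x) \<noteq> even x) \<noteq> (if symq (p x) then gs else gk))"
    and bad: "\<not> adj_cond m p"
  shows "adj_cond m p'"
proof -
  let ?same = "\<lambda>p k. same_type (p k) (p (k + 1))"
  obtain i where i: "i \<in> {1..<m}" "?same p i" "\<forall>j\<in>{1..<i}. \<not> ?same p j" "\<not> good_label (p (i + 1))"
    using bad unfolding adj_cond_def good_label_def by blast
  have same: "?same p' k = ?same p k" if "k \<in> {1..<m}" for k
    using adjacent_types_transfer[OF N N' T that] .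
  have alt: "\<forall>j\<in>{1..<i}. symq (p (j + 1)) = (\<not> symq (p j))"
  proof
    fix j assume "j \<in> {1..<i}"
    then have "j \<in> {1..<m}" "\<not> ?same p j" using i(1,3) by auto
    then show "symq (p (j + 1)) = (\<not> symq (p j))"
      using adjacent_types_alternate[of m p j] N unfolding A_normal_def by blast
  qed
  have alt': "\<forall>j\<in>{1..<i}. symq (p' (j + 1)) = (\<not> symq (p' j))"
    using alt T i(1) by auto
  define r where "r = (if odd i then 1 else (2::nat))"
  have im: "1 \<le> i" "i \<le> m" "i + 1 \<in> {1..m}" "r \<in> {1..m}" "even r = even i"
    using i(1) unfolding r_def by auto
  have "good_label (p r)" "symq (p r) = symq (p i)"
    using alternating_prefix_pivot[OF N im(1,2) alt] unfolding r_def by auto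
  moreover have "good_label (p' r)"
    using alternating_prefix_pivot[OF N' im(1,2) alt'] unfolding r_def by auto
  moreover have "symq (p (i + 1)) = symq (p i)"
    using st_iff[of "p i" "p (i + 1)"] N i(2) im unfolding A_normal_def by auto
  ultimately have good: "good_label (p' (i + 1))"
    using L[rule_format, OF im(3)] L[rule_format, OF im(4)] i(4) im(5) by auto
  show ?thesis
    unfolding adj_cond_def
  proof (intro ballI impI)
    fix k assume k: "k \<in> {1..<m}" "?same p' k \<and> (\<forall>j\<in>{1..<k}. \<not> ?same p' j)"
    then have "?same p k" "\<forall>j\<in>{1..<k}. \<not> ?same p j" using same by auto
    then have "k = i" using adj_first_uniq[of i m "?same p" k] i k(1) by blast
    then show "p' (k + 1) \<in> {1, 6}" using good unfolding good_label_def by simp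
  qed
qed

text \<open>The parity argument for the second clause of (v): the types alternate
  along all of 1..m and p_m is symmetric, so the flag gs equals the parity of
  m, which is exactly what turns the central label 3 into 0.\<close>
lemma adj_central_cond_repair:
  assumes N: "A_normal m p" and N': "A_normal m p'"
    and T: "\<forall>x\<in>{1..m}. symq (p' x) = symq (p x)"
    and L: "\<forall>x\<in>{1..m}. good_label (p' x) = ((good_label (p x) \<noteq> even x) \<noteq> (if symq (p x) then gs else gk))"
    and pc: "pc \<in> {0,3}" and pc': "pc' = A_act_col gs (if odd m then col_negA pc else pc)"
    and bad: "\<not> adj_central_cond m p pc"
  shows "pc' = 0"
proof -
  have noadj: "\<forall>i\<in>{1..<m}. \<not> same_type (p i) (p (i + 1))" and m: "1 \<le> m"
    and sm: "symq (p m)" and pc3: "pc = 3"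
    using bad pc unfolding adj_central_cond_def by auto
  have alt: "\<forall>j\<in>{1..<m}. symq (p (j + 1)) = (\<not> symq (p j))"
    using noadj adjacent_types_alternate[of m p] N unfolding A_normal_def by blast
  have alt': "\<forall>j\<in>{1..<m}. symq (p' (j + 1)) = (\<not> symq (p' j))"
    using alt T by auto
  define r where "r = (if odd m then 1 else (2::nat))"
  have r: "r \<in> {1..m}" "even r = even m" using m unfolding r_def by auto
  have "good_label (p r)" "symq (p r)" "good_label (p' r)"
    using alternating_prefix_pivot[OF N m order.refl alt] alternating_prefix_pivot[OF N' m order.refl alt'] sm
    unfolding r_def by auto
  then have "gs = even m" using L[rule_format, OF r(1)] r(2) by auto
  then show ?thesis using pc' pc3 by (auto simp: A_act_col_def label_maps)
qed

text \<open>Both clauses of (v) together: if one of them fails for p, the other holds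
  trivially for p (and hence for p', which has the same adjacent types), and
  the failing one is repaired by the parity argument.\<close>
lemma adj_conds_repair:
  assumes N: "A_normal m p" and N': "A_normal m p'"
    and T: "\<forall>x\<in>{1..m}. symq (p' x) = symq (p x)"
    and L: "\<forall>x\<in>{1..m}. good_label (p' x) = ((good_label (p x) \<noteq> even x) \<noteq> (if symq (p x) then gs else gk))"
    and pc: "pc \<in> {0,3}" and pc': "pc' = A_act_col gs (if odd m then col_negA pc else pc)"
    and bad: "\<not> (adj_cond m p \<and> adj_central_cond m p pc)"
  shows "adj_cond m p' \<and> adj_central_cond m p' pc'"
proof
  have same: "same_type (p' i) (p' (i + 1)) = same_type (p i) (p (i + 1))" if "i \<in> {1..<m}" for i
    using adjacent_types_transfer[OF N N' T that] .
  show "adj_cond m p'"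
  proof (cases "adj_cond m p")
    case True
    then have "\<forall>i\<in>{1..<m}. \<not> same_type (p i) (p (i + 1))"
      using bad unfolding adj_central_cond_def by blast
    then show ?thesis using same unfolding adj_cond_def by blast
  qed (rule adj_cond_repair[OF N N' T L])
  show "adj_central_cond m p' pc'"
  proof (cases "adj_central_cond m p pc")
    case True
    then have "\<exists>i\<in>{1..<m}. same_type (p i) (p (i + 1))"
      using bad unfolding adj_cond_def by blast
    then show ?thesis using same unfolding adj_central_cond_def by blast
  next
    case False
    then show ?thesis
      using adj_central_cond_repair[OF N N' T L pc pc'] unfolding adj_central_cond_def by blast
  qed
qed

text \<open>One alternation followed by renormalisation, with the resulting relation
  between the old and the new labels: types are kept, goodness changes by the
  parity of the index (alternation) and by a flag depending on the type
  (renormalisation).\<close>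
lemma A_alt_renormalize:
  assumes S: "(A,A,C,D) \<in> NS n" and o: "odd n"
  obtains A' C' D' gs gk where "(A',A',C',D') \<in> NS n" "NS_equiv n (A,A,C,D) (A',A',C',D')"
    "A_normal (n div 2) (quad A' A')"
    "(\<forall>i\<in>{1..n div 2}. \<not> symq (quad A' A' i)) \<longrightarrow> central A' A' = 0"
    "\<forall>x\<in>{1..n div 2}. symq (quad A' A' x) = symq (quad A A x)"
    "\<forall>x\<in>{1..n div 2}. good_label (quad A' A' x) =
        ((good_label (quad A A x) \<noteq> even x) \<noteq> (if symq (quad A A x) then gs else gk))"
    "central A' A' = A_act_col gs (if odd (n div 2) then col_negA (central A A) else central A A)"
proof -
  let ?m = "n div 2" and ?A2 = "altseq A"
  note AL = alt_effect_odd[OF S o]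
  have S2: "(?A2, ?A2, altseq C, altseq D) \<in> NS n"
    and E2: "NS_equiv n (A,A,C,D) (?A2, ?A2, altseq C, altseq D)" using AL by blast+
  have p2: "\<forall>i\<in>{1..?m}. quad ?A2 ?A2 i = (if even i then lab_negA (quad A A i) else quad A A i)"
    using AL by blast
  obtain A3 C3 D3 gs gk where N3: "A_move n ?A2 (altseq C) (altseq D) A3 C3 D3 gs gk"
    "first_label ?m symq 1 (quad A3 A3)" "first_label ?m skewq 6 (quad A3 A3)"
    "odd n \<and> (\<forall>i\<in>{1..?m}. \<not> symq (quad A3 A3 i)) \<longrightarrow> central A3 A3 = 0"
    using A_normalize[OF S2] by blast
  have S3: "(A3,A3,C3,D3) \<in> NS n" "NS_equiv n (A,A,C,D) (A3,A3,C3,D3)"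
    using A_move_E[OF N3(1)] E2 equiv_trans by blast+
  have p3: "\<forall>i\<in>{1..?m}. quad A3 A3 i = A_act gs gk (quad ?A2 ?A2 i)"
    using N3(1) unfolding A_move_def by blast
  have r: "\<forall>i\<in>{1..?m}. quad A A i \<in> {1,3,6,8}" using A_range[OF S] by blast
  have N: "A_normal ?m (quad A3 A3)" unfolding A_normal_def using A_range[OF S3(1)] N3(2,3) by blast
  have T: "\<forall>x\<in>{1..?m}. symq (quad A3 A3 x) = symq (quad A A x)"
    using p3 p2 r A_act_sym lab_negA_good by auto
  have L: "\<forall>x\<in>{1..?m}. good_label (quad A3 A3 x) =
        ((good_label (quad A A x) \<noteq> even x) \<noteq> (if symq (quad A A x) then gs else gk))"
  proof
    fix x assume x: "x \<in> {1..?m}"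
    then have q2: "quad ?A2 ?A2 x \<in> {1,3,6,8}"
      "good_label (quad ?A2 ?A2 x) = (good_label (quad A A x) \<noteq> even x)"
      "symq (quad ?A2 ?A2 x) = symq (quad A A x)"
      using p2 r lab_negA_good by auto
    show "good_label (quad A3 A3 x) =
        ((good_label (quad A A x) \<noteq> even x) \<noteq> (if symq (quad A A x) then gs else gk))"
      using A_act_good[OF q2(1), of gs gk] q2(2,3) p3 x by auto
  qed
  have "central A3 A3 = A_act_col gs (central ?A2 ?A2)" using N3(1) o unfolding A_move_def by blast
  then have pc: "central A3 A3 = A_act_col gs (if odd ?m then col_negA (central A A) else central A A)"
    using AL by simp
  show ?thesis using that[OF S3 N _ T L pc] N3(4) o by blast
qed

lemma A_canonical_exists_odd:
  assumes S: "(A,A,C,D) \<in> NS n" and o: "odd n"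
  shows "\<exists>A' C' D'. (A',A',C',D') \<in> NS n \<and> NS_equiv n (A,A,C,D) (A',A',C',D') \<and> A_canonical n (quad A' A') (central A' A')"
proof -
  let ?m = "n div 2"
  obtain A1 C1 D1 gs1 gk1 where N1: "A_move n A C D A1 C1 D1 gs1 gk1" "first_label ?m symq 1 (quad A1 A1)"
    "first_label ?m skewq 6 (quad A1 A1)" "odd n \<and> (\<forall>i\<in>{1..?m}. \<not> symq (quad A1 A1 i)) \<longrightarrow> central A1 A1 = 0"
    using A_normalize[OF S] by blast
  have S1: "(A1,A1,C1,D1) \<in> NS n" "NS_equiv n (A,A,C,D) (A1,A1,C1,D1)" using A_move_E[OF N1(1)] by auto
  let ?p = "quad A1 A1" and ?pc = "central A1 A1"
  have N: "A_normal ?m ?p" unfolding A_normal_def using A_range[OF S1(1)] N1(2,3) by blast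
  show ?thesis
  proof (cases "adj_cond ?m ?p \<and> adj_central_cond ?m ?p ?pc")
    case True
    then have "A_canonical n ?p ?pc" using A_canonical_odd_intro[OF o N] N1(4) o by blast
    then show ?thesis using S1 by blast
  next
    case v_fails: False
    obtain A3 C3 D3 gs gk where S3: "(A3,A3,C3,D3) \<in> NS n" "NS_equiv n (A1,A1,C1,D1) (A3,A3,C3,D3)"
      and N': "A_normal ?m (quad A3 A3)"
      and c3: "(\<forall>i\<in>{1..?m}. \<not> symq (quad A3 A3 i)) \<longrightarrow> central A3 A3 = 0"
      and T: "\<forall>x\<in>{1..?m}. symq (quad A3 A3 x) = symq (?p x)"
      and L: "\<forall>x\<in>{1..?m}. good_label (quad A3 A3 x) =
                ((good_label (?p x) \<noteq> even x) \<noteq> (if symq (?p x) then gs else gk))"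
      and pc3: "central A3 A3 = A_act_col gs (if odd ?m then col_negA ?pc else ?pc)"
      by (rule A_alt_renormalize[OF S1(1) o])
    have "adj_cond ?m (quad A3 A3) \<and> adj_central_cond ?m (quad A3 A3) (central A3 A3)"
      using adj_conds_repair[OF N N' T L A_crange[OF S1(1) o] pc3 v_fails] .
    then have "A_canonical n (quad A3 A3) (central A3 A3)" using A_canonical_odd_intro[OF o N' c3] by blast
    then show ?thesis using S3 S1(2) equiv_trans by blast
  qed
qed


text \<open>Canonical form is the conjunction of the conditions on (A;A) and on (C;D);
  the first are achieved by transformations that may change C and D, the second
  by transformations that leave A untouched.\<close>

lemma canonical_of:
  assumes l: "length A = n" and a: "A_canonical n (quad A A) (central A A)" and c: "CD_canonical n (quad C D) (central C D)"
  shows "canonical (A, A, C, D)"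
  unfolding canonical_def prod.case Let_def l
  using conjI[OF a c] unfolding A_canonical_def CD_canonical_def first_label_def adj_cond_def adj_central_cond_def
  by (simp only: conj_assoc)

theorem proposition3p2:
  fixes n :: nat
  assumes "n \<ge> 1"
  shows "\<forall>S\<in>NS n. \<exists>T. NS_equiv n S T \<and> canonical T"
proof
  fix S assume S0: "S \<in> NS n"
  obtain A B C D where SS: "S = (A, B, C, D)" by (cases S) auto
  have BA: "B = A" using S0 SS by (simp add: NS_iff)
  have S: "(A,A,C,D) \<in> NS n" using S0 SS BA by simp
  obtain A1 C1 D1 where 1: "(A1,A1,C1,D1) \<in> NS n" "NS_equiv n (A,A,C,D) (A1,A1,C1,D1)"
    "A_canonical n (quad A1 A1) (central A1 A1)"
  proof (cases "even n")
    case True then show ?thesis using that A_canonical_exists_even[OF S True assms] by blast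
  next
    case False then show ?thesis using that A_canonical_exists_odd[OF S] by blast
  qed
  obtain C2 D2 where 2: "(A1,A1,C2,D2) \<in> NS n" "NS_equiv n (A1,A1,C1,D1) (A1,A1,C2,D2)"
    "CD_canonical n (quad C2 D2) (central C2 D2)"
    using CD_canonical_exists[OF 1(1)] by blast
  have l: "length A1 = n" using 1(1) by (simp add: NS_iff)
  have "canonical (A1, A1, C2, D2)" using canonical_of[OF l 1(3) 2(3)] .
  moreover have "NS_equiv n S (A1, A1, C2, D2)" using SS BA 1(2) 2(2) equiv_trans by blast
  ultimately show "\<exists>T. NS_equiv n S T \<and> canonical T" by blast
qed


end
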